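(* Let $n=1$ and assume $\delta_1\in[1/2,1)$. Then there is $\lambda>0$ such that, for each sign $\pm$, \[ \int_{C_t^\pm}\Gamma_\delta(\varphi)(x)\,dx\ \ge\ \lambda\,t^{-2}\int_{C_t^\pm}\big(\varphi(x)-\langle\varphi\rangle_\pm\big)^2dx \] for all $\varphi\in C_c^1(\mathbb R^{1+m})$ and all $t>0$, where $\langle\varphi\rangle_\pm=|C_t^\pm|^{-1}\int_{C_t^\pm}\varphi$.
   Context: Let $m\ge1$, $x=(x_1,x_2)\in\mathbb R\times\mathbb R^m$, $|\cdot|$ Euclidean norms and $|\cdot|_\infty$ the $\ell_\infty$-norm. For $a\ge0$, $a^{(\alpha,\alpha')}=a^\alpha$ if $a\le1$ and $a^{\alpha'}$ if $a\ge1$. Fix $\delta_1,\delta_1'\in[0,1)$, $\delta_2,\delta_2'\ge0$; $\Gamma_\delta(\varphi)(x)=|x_1|^{(2\delta_1,2\delta_1')}|\partial_{x_1}\varphi(x)|^2+|x_1|^{(2\delta_2,2\delta_2')}|\nabla_{x_2}\varphi(x)|^2$. Let $\alpha=(1-\delta_1)^{-1}$, $\alpha'=(1-\delta_1')^{-1}$, $\beta=(1+\delta_2-\delta_1)\alpha$, $\beta'=(1+\delta_2'-\delta_1')\alpha'$, $C_t=\{x:|x_1|<t^{(\alpha,\alpha')},\ |x_2|_\infty<t^{(\beta,\beta')}\}$, $C_t^+=C_t\cap\{x_1>0\}$, $C_t^-=C_t\cap\{x_1<0\}$. *)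

theory Defs
  imports "HOL-Analysis.Analysis"
begin

type_synonym 'm pt = "real \<times> (real ^ 'm)"

definition ppow :: "real \<Rightarrow> real \<Rightarrow> real \<Rightarrow> real" where
  "ppow a al al' = (if a \<le> 1 then a powr al else a powr al')"

definition Cc1 :: "('m::finite pt \<Rightarrow> real) \<Rightarrow> bool" where
  "Cc1 \<phi> \<longleftrightarrow>
     (\<exists>f'. (\<forall>x. (\<phi> has_derivative blinfun_apply (f' x)) (at x)) \<and> continuous_on UNIV f')
     \<and> compact (closure {x. \<phi> x \<noteq> 0})"

definition d1 :: "('m::finite pt \<Rightarrow> real) \<Rightarrow> 'm pt \<Rightarrow> real" where
  "d1 \<phi> x = frechet_derivative \<phi> (at x) (1, 0)"

definition grad2sq :: "('m::finite pt \<Rightarrow> real) \<Rightarrow> 'm pt \<Rightarrow> real" where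
  "grad2sq \<phi> x = (\<Sum>i\<in>(Basis :: (real^'m) set). (frechet_derivative \<phi> (at x) (0, i))\<^sup>2)"

definition Gamma_delta ::
  "real \<Rightarrow> real \<Rightarrow> real \<Rightarrow> real \<Rightarrow> ('m::finite pt \<Rightarrow> real) \<Rightarrow> 'm pt \<Rightarrow> real" where
  "Gamma_delta d1' d1'' d2 d2' \<phi> x =
     ppow \<bar>fst x\<bar> (2*d1') (2*d1'') * (d1 \<phi> x)\<^sup>2
   + ppow \<bar>fst x\<bar> (2*d2) (2*d2') * grad2sq \<phi> x"

definition Cbox :: "real \<Rightarrow> real \<Rightarrow> real \<Rightarrow> real \<Rightarrow> real \<Rightarrow> ('m::finite) pt set" where
  "Cbox d1' d1'' d2 d2' t =
    (let a = 1 / (1 - d1'); a' = 1 / (1 - d1'');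
         b = (1 + d2 - d1') * a; b' = (1 + d2' - d1'') * a'
     in {x. \<bar>fst x\<bar> < ppow t a a' \<and> (\<forall>i. \<bar>snd x $ i\<bar> < ppow t b b')})"

definition Cplus :: "real \<Rightarrow> real \<Rightarrow> real \<Rightarrow> real \<Rightarrow> real \<Rightarrow> ('m::finite) pt set" where
  "Cplus d1' d1'' d2 d2' t = Cbox d1' d1'' d2 d2' t \<inter> {x. fst x > 0}"

definition Cminus :: "real \<Rightarrow> real \<Rightarrow> real \<Rightarrow> real \<Rightarrow> real \<Rightarrow> ('m::finite) pt set" where
  "Cminus d1' d1'' d2 d2' t = Cbox d1' d1'' d2 d2' t \<inter> {x. fst x < 0}"

end

theory Submission
  imports Defs
begin

text \<open>
  On \<open>C\<^sub>t\<^sup>+ = (0, A) \<times> Q\<close>, with \<open>A = t^(\<alpha>,\<alpha>')\<close> and \<open>Q\<close> the cube of half-side \<open>B = t^(\<beta>,\<beta>')\<close>,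
  the variance of \<open>\<phi>\<close> is at most the average, over \<open>w\<close> in the outer half \<open>(A/2, A) \<times> Q\<close>,
  of \<open>\<integral>(\<phi> x - \<phi> w)\<^sup>2 dx\<close>.  Moving from \<open>x\<close> to \<open>w\<close> first along \<open>x\<^sub>1\<close> and then along \<open>x\<^sub>2\<close>
  splits this into two terms.  The first is controlled by the Hardy inequality
  \<open>\<integral>(g - g s)\<^sup>2 \<le> 4 \<integral>x\<^sup>2 g'\<^sup>2\<close> on \<open>(0, A)\<close> together with \<open>x\<^sub>1\<^sup>2 \<le> t\<^sup>2 |x\<^sub>1|^(2\<delta>\<^sub>1)\<close> there; the
  second by the Poincar\'e inequality of the cube, whose constant \<open>B\<^sup>2\<close> is comparable to
  \<open>t\<^sup>2 |x\<^sub>1|^(2\<delta>\<^sub>2)\<close> precisely because \<open>|x\<^sub>1| \<ge> A/2\<close> on the outer half.  \<open>C\<^sub>t\<^sup>-\<close> is symmetric.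
\<close>

section \<open>A one-dimensional Hardy inequality\<close>

lemma hardy_inequality_interval:
  fixes g g' :: "real \<Rightarrow> real"
  assumes pq: "p \<le> q"
    and g: "\<And>x. (g has_real_derivative g' x) (at x)" and g': "continuous_on UNIV g'"
    and Fq: "(q - L) * (g q - c)^2 = 0" and Fp: "(p - L) * (g p - c)^2 = 0"
  shows "integral {p..q} (\<lambda>x. (g x - c)^2) \<le> 4 * integral {p..q} (\<lambda>x. (x - L)^2 * (g' x)^2)"
proof -
  have cg: "continuous_on UNIV g"
    using g by (meson DERIV_isCont continuous_at_imp_continuous_on)
  let ?F = "\<lambda>x. (x - L) * (g x - c)^2"
  let ?F' = "\<lambda>x. (g x - c)^2 + 2 * (x - L) * (g x - c) * g' x"
  \<comment> \<open>\<open>?F\<close> vanishes at both endpoints, so \<open>?F'\<close> integrates to zero.\<close>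
  have "(?F has_real_derivative ?F' x) (at x)" for x
    by (rule derivative_eq_intros g refl | simp)+
  then have "(?F' has_integral (?F q - ?F p)) {p..q}"
    by (intro fundamental_theorem_of_calculus[OF pq])
       (simp add: has_real_derivative_iff_has_vector_derivative[symmetric] has_field_derivative_at_within)
  then have int_F': "integral {p..q} ?F' = 0"
    using Fp Fq by (simp add: integral_unique)
  have i1: "(\<lambda>x. (g x - c)^2) integrable_on {p..q}"
    and i2: "(\<lambda>x. 2 * (x - L) * (g x - c) * g' x) integrable_on {p..q}"
    and i3: "(\<lambda>x. (x - L)^2 * (g' x)^2) integrable_on {p..q}"
    by (intro integrable_continuous_interval continuous_intros
          continuous_on_subset[OF cg] continuous_on_subset[OF g']; simp)+
  have "integral {p..q} (\<lambda>x. (g x - c)^2) = integral {p..q} (\<lambda>x. - (2 * (x - L) * (g x - c) * g' x))"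
    using int_F' integral_add[OF i1 i2] by (simp add: integral_neg)
  also have "\<dots> \<le> integral {p..q} (\<lambda>x. (1/2) * (g x - c)^2 + 2 * ((x - L)^2 * (g' x)^2))"
  proof (rule integral_le)
    show "(\<lambda>x. - (2 * (x - L) * (g x - c) * g' x)) integrable_on {p..q}"
      using i2 by (rule integrable_neg)
    show "(\<lambda>x. (1/2) * (g x - c)^2 + 2 * ((x - L)^2 * (g' x)^2)) integrable_on {p..q}"
      by (intro integrable_add integrable_on_mult_right i1 i3)
    fix x
    have "0 \<le> 2 * ((g x - c) / 2 + (x - L) * g' x)^2" by simp
    then show "- (2 * (x - L) * (g x - c) * g' x) \<le> (1/2) * (g x - c)^2 + 2 * ((x - L)^2 * (g' x)^2)"
      by (simp add: power2_eq_square field_simps)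
  qed
  also have "\<dots> = (1/2) * integral {p..q} (\<lambda>x. (g x - c)^2) + 2 * integral {p..q} (\<lambda>x. (x - L)^2 * (g' x)^2)"
    by (subst integral_add) (auto intro!: integrable_on_mult_right i1 i3)
  finally show ?thesis by linarith
qed

text \<open>Split at \<open>s\<close>; on each side the weight of the nearer endpoint, \<open>(x - a)\<^sup>2\<close> or
  \<open>(x - b)\<^sup>2\<close>, is dominated by \<open>x\<^sup>2\<close> because \<open>s\<close> lies on the half of \<open>[a, b]\<close> away from \<open>0\<close>.\<close>

lemma hardy_inequality_far_point:
  fixes g g' :: "real \<Rightarrow> real"
  assumes as: "a \<le> s" and sb: "s \<le> b" and zero: "0 \<notin> {a<..<b}" and far: "\<bar>(a + b) / 2\<bar> \<le> \<bar>s\<bar>"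
    and g: "\<And>x. (g has_real_derivative g' x) (at x)" and g': "continuous_on UNIV g'"
  shows "integral {a..b} (\<lambda>x. (g x - g s)^2) \<le> 4 * integral {a..b} (\<lambda>x. x^2 * (g' x)^2)"
proof -
  have cg: "continuous_on UNIV g"
    using g by (meson DERIV_isCont continuous_at_imp_continuous_on)
  have int: "f integrable_on {p..q}" if "continuous_on UNIV f" for f :: "real \<Rightarrow> real" and p q
    using that by (intro integrable_continuous_interval continuous_on_subset[OF that]) simp
  have left: "integral {a..s} (\<lambda>x. (g x - g s)^2) \<le> 4 * integral {a..s} (\<lambda>x. x^2 * (g' x)^2)"
  proof -
    have "integral {a..s} (\<lambda>x. (g x - g s)^2) \<le> 4 * integral {a..s} (\<lambda>x. (x - a)^2 * (g' x)^2)"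
      by (rule hardy_inequality_interval[OF as g g']) auto
    also have "\<dots> \<le> 4 * integral {a..s} (\<lambda>x. x^2 * (g' x)^2)"
      using as sb zero far
      by (intro mult_left_mono integral_le int continuous_intros g' mult_right_mono)
         (auto simp: abs_le_square_iff[symmetric])
    finally show ?thesis .
  qed
  have right: "integral {s..b} (\<lambda>x. (g x - g s)^2) \<le> 4 * integral {s..b} (\<lambda>x. x^2 * (g' x)^2)"
  proof -
    have "integral {s..b} (\<lambda>x. (g x - g s)^2) \<le> 4 * integral {s..b} (\<lambda>x. (x - b)^2 * (g' x)^2)"
      by (rule hardy_inequality_interval[OF sb g g']) auto
    also have "\<dots> \<le> 4 * integral {s..b} (\<lambda>x. x^2 * (g' x)^2)"
      using as sb zero far
      by (intro mult_left_mono integral_le int continuous_intros g' mult_right_mono)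
         (auto simp: abs_le_square_iff[symmetric])
    finally show ?thesis .
  qed
  have "integral {a..s} f + integral {s..b} f = integral {a..b} f" if "continuous_on UNIV f" for f :: "real \<Rightarrow> real"
    by (rule Henstock_Kurzweil_Integration.integral_combine[OF as sb int[OF that]])
  from this[of "\<lambda>x. (g x - g s)^2"] this[of "\<lambda>x. x^2 * (g' x)^2"] left right
  show ?thesis by (simp add: continuous_intros cg g')
qed

lemma nn_integral_interval_continuous:
  fixes f :: "real \<Rightarrow> real"
  assumes cf: "continuous_on UNIV f" and nn: "\<And>x. 0 \<le> f x" and "a \<le> b"
  shows "(\<integral>\<^sup>+x\<in>{a<..<b}. ennreal (f x) \<partial>lborel) = ennreal (integral {a..b} f)"
proof -
  have "(\<integral>\<^sup>+x\<in>{a<..<b}. ennreal (f x) \<partial>lborel) = (\<integral>\<^sup>+x\<in>{a..b}. ennreal (f x) \<partial>lborel)"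
  proof (rule nn_integral_cong_AE)
    have "AE x in lborel. x \<noteq> a" "AE x in lborel. x \<noteq> b" by (auto intro: AE_lborel_singleton)
    then show "AE x in lborel. ennreal (f x) * indicator {a<..<b} x = ennreal (f x) * indicator {a..b} x"
      by eventually_elim (auto split: split_indicator)
  qed
  also have "\<dots> = (\<integral>\<^sup>+x. ennreal (indicator {a..b} x *\<^sub>R f x) \<partial>lborel)"
    by (rule nn_integral_cong) (auto split: split_indicator)
  also have "\<dots> = ennreal (integral {a..b} f)"
  proof (rule nn_integral_has_integral_lborel)
    show "(\<lambda>x. indicator {a..b} x *\<^sub>R f x) \<in> borel_measurable borel"
      by (rule borel_measurable_continuous_on_indicator) (auto intro: continuous_on_subset[OF cf])
    show "0 \<le> indicator {a..b} x *\<^sub>R f x" for x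
      using nn by (simp split: split_indicator)
    have "(f has_integral integral {a..b} f) {a..b}"
      by (intro integrable_integral integrable_continuous_interval continuous_on_subset[OF cf]) simp
    moreover have "(\<lambda>x. indicator {a..b} x *\<^sub>R f x) = (\<lambda>x. if x \<in> {a..b} then f x else 0)"
      by (auto simp: indicator_def)
    ultimately show "((\<lambda>x. indicator {a..b} x *\<^sub>R f x) has_integral integral {a..b} f) UNIV"
      by (metis has_integral_restrict_UNIV)
  qed
  finally show ?thesis .
qed

lemma set_integrable_bounded:
  fixes f :: "'a::euclidean_space \<Rightarrow> real"
  assumes [measurable]: "S \<in> sets borel" "f \<in> borel_measurable borel"
    and "bounded S" and "\<And>x. x \<in> S \<Longrightarrow> \<bar>f x\<bar> \<le> K"
  shows "set_integrable lborel S f"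
  unfolding set_integrable_def
  by (rule integrableI_bounded_set_indicator[where B=K])
     (use assms emeasure_bounded_finite[OF \<open>bounded S\<close>] in auto)

lemma set_integrable_continuous:
  fixes f :: "'a::euclidean_space \<Rightarrow> real"
  assumes "S \<in> sets borel" and "bounded S" and cf: "continuous_on UNIV f"
  shows "set_integrable lborel S f"
proof -
  have "compact (f ` closure S)"
    using \<open>bounded S\<close> by (intro compact_continuous_image continuous_on_subset[OF cf]) auto
  then obtain K where "\<And>y. y \<in> f ` closure S \<Longrightarrow> norm y \<le> K"
    using compact_imp_bounded bounded_iff by metis
  then show ?thesis
    using assms closure_subset
    by (intro set_integrable_bounded[where K=K] borel_measurable_continuous_onI) auto
qed

lemma set_nn_integral_eq_set_integral:
  fixes f :: "'a \<Rightarrow> real"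
  assumes "set_integrable M S f" and "\<And>x. x \<in> S \<Longrightarrow> 0 \<le> f x"
  shows "(\<integral>\<^sup>+x\<in>S. ennreal (f x) \<partial>M) = ennreal (LINT x:S|M. f x)"
proof -
  have "(\<integral>\<^sup>+x\<in>S. ennreal (f x) \<partial>M) = (\<integral>\<^sup>+x. ennreal (indicator S x *\<^sub>R f x) \<partial>M)"
    by (rule nn_integral_cong) (auto split: split_indicator)
  also have "\<dots> = ennreal (LINT x:S|M. f x)"
    unfolding set_lebesgue_integral_def
    by (rule nn_integral_eq_integral) (use assms in \<open>auto simp: set_integrable_def split: split_indicator\<close>)
  finally show ?thesis .
qed

lemma mean_square_deviation_le:
  fixes f :: "'a \<Rightarrow> real"
  assumes Sm: "S \<in> sets M" and Sf: "emeasure M S < \<infinity>" and Sp: "measure M S > 0"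
    and i1: "set_integrable M S f" and i2: "set_integrable M S (\<lambda>x. (f x)^2)"
  shows "(LINT x:S|M. (f x - (LINT y:S|M. f y) / measure M S)^2) \<le> (LINT x:S|M. (f x - c)^2)"
proof -
  let ?m = "measure M S" and ?I1 = "LINT y:S|M. f y" and ?I2 = "LINT y:S|M. (f y)^2"
  have ic: "set_integrable M S (\<lambda>x. k)" for k :: real
    unfolding set_integrable_def
    by (rule integrableI_bounded_set_indicator[where B="\<bar>k\<bar>"]) (use Sm Sf in auto)
  have expand: "(LINT x:S|M. (f x - c)^2) = ?I2 - 2 * c * ?I1 + c^2 * ?m" for c
  proof -
    have "(LINT x:S|M. (f x - c)^2) = (LINT x:S|M. ((f x)^2 - (2 * c) * f x) + c^2)"
      by (rule set_lebesgue_integral_cong) (use Sm in \<open>auto simp: power2_eq_square algebra_simps\<close>)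
    also have "\<dots> = (LINT x:S|M. (f x)^2 - (2 * c) * f x) + (LINT x:S|M. c^2)"
      by (rule set_integral_add(2)) (use i1 i2 ic in auto)
    also have "(LINT x:S|M. (f x)^2 - (2 * c) * f x) = ?I2 - (2 * c) * ?I1"
      using i1 i2 by (simp add: set_integral_diff(2))
    also have "(LINT x:S|M. c^2) = c^2 * ?m"
      using set_integral_const[OF Sm, of "c^2"] Sf by (simp add: top.not_eq_extremum)
    finally show ?thesis by simp
  qed
  have "(LINT x:S|M. (f x - c)^2) - (LINT x:S|M. (f x - ?I1 / ?m)^2) = (?I1 - c * ?m)^2 / ?m"
    unfolding expand using Sp by (simp add: field_simps power2_eq_square)
  moreover have "(?I1 - c * ?m)^2 / ?m \<ge> 0"
    using Sp by simp
  ultimately show ?thesis by linarith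
qed

lemma mean_square_deviation_le_nn_integral:
  fixes f :: "'a::euclidean_space \<Rightarrow> real"
  assumes S: "S \<in> sets borel" "bounded S" "0 < measure lborel S" and cf: "continuous_on UNIV f"
  shows "ennreal (LINT x:S|lborel. (f x - (LINT y:S|lborel. f y) / measure lborel S)^2)
           \<le> (\<integral>\<^sup>+x\<in>S. ennreal ((f x - c)^2) \<partial>lborel)"
proof -
  have int: "set_integrable lborel S g" if "continuous_on UNIV g" for g :: "'a \<Rightarrow> real"
    using S(1,2) that by (rule set_integrable_continuous)
  have "(LINT x:S|lborel. (f x - (LINT y:S|lborel. f y) / measure lborel S)^2) \<le> (LINT x:S|lborel. (f x - c)^2)"
    using S emeasure_bounded_finite[OF \<open>bounded S\<close>]
    by (intro mean_square_deviation_le int continuous_intros cf) auto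
  moreover have "set_integrable lborel S (\<lambda>x. (f x - c)^2)"
    by (intro int continuous_intros cf)
  ultimately show ?thesis
    by (simp add: set_nn_integral_eq_set_integral ennreal_leI)
qed

lemma nn_integral_lborel_affine:
  fixes F :: "'a::euclidean_space \<Rightarrow> ennreal"
  assumes [measurable]: "F \<in> borel_measurable borel" and c: "c \<noteq> 0"
  shows "(\<integral>\<^sup>+z. F z \<partial>lborel) = ennreal (\<bar>c\<bar>^DIM('a)) * (\<integral>\<^sup>+x. F (t + c *\<^sub>R x) \<partial>lborel)"
  by (subst lborel_affine[OF c, of t]) (simp add: nn_integral_density nn_integral_distr nn_integral_cmult)

lemma borel_measurable_fst_borel [measurable]: "fst \<in> (borel :: ('a::topological_space \<times> 'b::topological_space) measure) \<rightarrow>\<^sub>M borel"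
  and borel_measurable_snd_borel [measurable]: "snd \<in> (borel :: ('a \<times> 'b) measure) \<rightarrow>\<^sub>M borel"
  by (intro borel_measurable_continuous_onI continuous_intros)+

lemma sets_lborel_pair:
  "sets (lborel \<Otimes>\<^sub>M lborel) = sets (borel :: ('a::euclidean_space \<times> 'b::euclidean_space) measure)"
  by (metis lborel_prod sets_lborel)

lemma nn_integral_lborel_pair_fst:
  fixes F :: "'a::euclidean_space \<times> 'b::euclidean_space \<Rightarrow> ennreal"
  assumes "F \<in> borel_measurable borel"
  shows "(\<integral>\<^sup>+x. F x \<partial>lborel) = (\<integral>\<^sup>+x1. \<integral>\<^sup>+x2. F (x1, x2) \<partial>lborel \<partial>lborel)"
  by (subst lborel_prod[symmetric], rule lborel.nn_integral_fst[symmetric])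
     (use assms sets_lborel_pair measurable_cong_sets in blast)

lemma nn_integral_lborel_pair_snd:
  fixes F :: "'a::euclidean_space \<times> 'b::euclidean_space \<Rightarrow> ennreal"
  assumes "F \<in> borel_measurable borel"
  shows "(\<integral>\<^sup>+x. F x \<partial>lborel) = (\<integral>\<^sup>+x2. \<integral>\<^sup>+x1. F (x1, x2) \<partial>lborel \<partial>lborel)"
  by (subst lborel_prod[symmetric], rule lborel_pair.nn_integral_snd[symmetric])
     (use assms sets_lborel_pair measurable_cong_sets in blast)

lemma borel_measurable_nn_integral_lborel_fst:
  fixes F :: "'a::euclidean_space \<times> 'b::euclidean_space \<Rightarrow> ennreal"
  assumes "F \<in> borel_measurable borel"
  shows "(\<lambda>x1. \<integral>\<^sup>+x2. F (x1, x2) \<partial>lborel) \<in> borel_measurable lborel"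
  using assms sets_lborel_pair measurable_cong_sets
  by (intro lborel.borel_measurable_nn_integral_fst[simplified]) blast

lemma borel_measurable_nn_integral_lborel_snd:
  fixes F :: "'a::euclidean_space \<times> 'b::euclidean_space \<Rightarrow> ennreal"
  assumes "F \<in> borel_measurable borel"
  shows "(\<lambda>x2. \<integral>\<^sup>+x1. F (x1, x2) \<partial>lborel) \<in> borel_measurable lborel"
proof -
  have "F \<in> borel_measurable (lborel \<Otimes>\<^sub>M lborel)"
    using assms sets_lborel_pair measurable_cong_sets by blast
  from lborel.borel_measurable_nn_integral_fst[OF measurable_pair_swap[OF this]]
  show ?thesis by simp
qed

lemma set_nn_integral_nested:
  fixes F :: "'a \<Rightarrow> 'b \<Rightarrow> ennreal"
  assumes "\<And>u. F u \<in> borel_measurable N" "B \<in> sets N"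
  shows "(\<integral>\<^sup>+u\<in>A. \<integral>\<^sup>+v\<in>B. F u v \<partial>N \<partial>M) = (\<integral>\<^sup>+u. \<integral>\<^sup>+v. F u v * indicator B v * indicator A u \<partial>N \<partial>M)"
  using assms by (intro nn_integral_cong nn_integral_multc[symmetric]) auto

lemma set_nn_integral_swap:
  fixes F :: "'a::euclidean_space \<Rightarrow> 'b::euclidean_space \<Rightarrow> ennreal"
  assumes F: "(\<lambda>p. F (fst p) (snd p)) \<in> borel_measurable borel"
    and [measurable]: "A \<in> sets borel" "B \<in> sets borel"
  shows "(\<integral>\<^sup>+u\<in>A. \<integral>\<^sup>+v\<in>B. F u v \<partial>lborel \<partial>lborel) = (\<integral>\<^sup>+v\<in>B. \<integral>\<^sup>+u\<in>A. F u v \<partial>lborel \<partial>lborel)"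
proof -
  have Fpair[measurable]: "(\<lambda>p. F (fst p) (snd p)) \<in> borel_measurable (lborel \<Otimes>\<^sub>M lborel)"
    using F sets_lborel_pair measurable_cong_sets by blast
  have [measurable]: "F u \<in> borel_measurable lborel" "(\<lambda>u. F u v) \<in> borel_measurable lborel" for u v
    using measurable_compose[OF measurable_Pair2' measurable_pair_swap[OF Fpair]]
      measurable_compose[OF measurable_Pair2' Fpair] by auto
  have "(\<integral>\<^sup>+u\<in>A. \<integral>\<^sup>+v\<in>B. F u v \<partial>lborel \<partial>lborel) = (\<integral>\<^sup>+u. \<integral>\<^sup>+v. F u v * indicator B v * indicator A u \<partial>lborel \<partial>lborel)"
    by (rule set_nn_integral_nested) auto
  also have "\<dots> = (\<integral>\<^sup>+v. \<integral>\<^sup>+u. F u v * indicator A u * indicator B v \<partial>lborel \<partial>lborel)"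
    by (subst lborel_pair.Fubini') (measurable, simp add: mult_ac)
  also have "\<dots> = (\<integral>\<^sup>+v\<in>B. \<integral>\<^sup>+u\<in>A. F u v \<partial>lborel \<partial>lborel)"
    by (rule set_nn_integral_nested[symmetric]) auto
  finally show ?thesis .
qed

section \<open>A Poincar\'e inequality on convex sets\<close>

lemma sq_diff_le_integral_segment:
  fixes \<psi> :: "'a::euclidean_space \<Rightarrow> real" and f' :: "'a \<Rightarrow> 'a \<Rightarrow>\<^sub>L real"
  assumes d: "\<And>z. (\<psi> has_derivative blinfun_apply (f' z)) (at z)"
    and cf: "continuous_on UNIV f'"
  shows "(\<psi> u - \<psi> v)^2 \<le> integral {0..1} (\<lambda>\<tau>. (f' (v + \<tau> *\<^sub>R (u - v)) (u - v))^2)"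
proof -
  let ?g = "\<lambda>\<tau>::real. \<psi> (v + \<tau> *\<^sub>R (u - v))"
  let ?h = "\<lambda>\<tau>::real. f' (v + \<tau> *\<^sub>R (u - v)) (u - v)"
  let ?I = "\<psi> u - \<psi> v"
  have ch: "continuous_on UNIV ?h"
    by (intro blinfun.continuous_on continuous_on_compose2[OF cf] continuous_intros) auto
  have "(?g has_vector_derivative ?h \<tau>) (at \<tau> within {0..1})" for \<tau>
  proof -
    have "((\<lambda>\<tau>. v + \<tau> *\<^sub>R (u - v)) has_derivative (\<lambda>x. x *\<^sub>R (u - v))) (at \<tau> within {0..1})"
      by (rule derivative_eq_intros refl | simp)+
    from has_derivative_in_compose[OF this has_derivative_at_withinI[OF d]]
    show ?thesis
      unfolding has_vector_derivative_def by (simp add: o_def blinfun.scaleR_right)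
  qed
  then have "(?h has_integral ?I) {0..1}"
    using fundamental_theorem_of_calculus[of 0 1 ?g ?h] by simp
  then have ih: "?h integrable_on {0..1}" and int_h: "integral {0..1} ?h = ?I"
    by (auto simp: integral_unique)
  have ih2: "(\<lambda>\<tau>. (?h \<tau>)^2) integrable_on {0..1}"
    by (intro integrable_continuous_interval continuous_intros continuous_on_subset[OF ch]) simp
  define c where "c = - 2 * ?I"
  \<comment> \<open>Cauchy--Schwarz on \<open>[0, 1]\<close>, in the form \<open>0 \<le> \<integral>(h - \<integral>h)\<^sup>2\<close>.\<close>
  have "0 \<le> integral {0..1} (\<lambda>\<tau>. (?h \<tau> - ?I)^2)"
    by (intro integral_nonneg integrable_continuous_interval continuous_intros continuous_on_subset[OF ch]) auto
  also have "\<dots> = integral {0..1} (\<lambda>\<tau>. ((?h \<tau>)^2 + c * ?h \<tau>) + ?I^2)"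
    unfolding c_def by (rule integral_cong) (simp add: power2_eq_square algebra_simps)
  also have "\<dots> = integral {0..1} (\<lambda>\<tau>. (?h \<tau>)^2) + c * integral {0..1} ?h + ?I^2"
    using integral_add[OF integrable_add[OF ih2 integrable_on_mult_right[OF ih]] integrable_const_ivl]
      integral_add[OF ih2 integrable_on_mult_right[OF ih]]
    by (simp add: integral_mult_right)
  finally show ?thesis
    unfolding int_h c_def by (simp add: power2_eq_square algebra_simps)
qed

text \<open>The map \<open>x \<mapsto> (1 - c) w + c x\<close> sends \<open>Q\<close> into itself and has Jacobian \<open>c\<^sup>n \<ge> 2\<^sup>-\<^sup>n\<close>.\<close>

lemma nn_integral_convex_contraction_le:
  fixes G :: "'a::euclidean_space \<Rightarrow> real" and Q :: "'a set"
  assumes cQ: "convex Q" and [measurable]: "Q \<in> sets borel" "G \<in> borel_measurable borel"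
    and w: "w \<in> Q" and c: "1/2 \<le> c" "c \<le> 1"
  shows "(\<integral>\<^sup>+x\<in>Q. ennreal (G ((1 - c) *\<^sub>R w + c *\<^sub>R x)) \<partial>lborel)
          \<le> 2^DIM('a) * (\<integral>\<^sup>+z\<in>Q. ennreal (G z) \<partial>lborel)"
proof -
  let ?F = "\<lambda>z. ennreal (G z) * indicator Q z"
  let ?J = "\<integral>\<^sup>+x. ?F ((1 - c) *\<^sub>R w + c *\<^sub>R x) \<partial>lborel"
  have "(\<integral>\<^sup>+x\<in>Q. ennreal (G ((1 - c) *\<^sub>R w + c *\<^sub>R x)) \<partial>lborel) \<le> ?J"
  proof (rule nn_integral_mono)
    fix x
    have "x \<in> Q \<Longrightarrow> (1 - c) *\<^sub>R w + c *\<^sub>R x \<in> Q"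
      using convexD[OF cQ w, of x "1 - c" c] c by auto
    then show "ennreal (G ((1 - c) *\<^sub>R w + c *\<^sub>R x)) * indicator Q x \<le> ?F ((1 - c) *\<^sub>R w + c *\<^sub>R x)"
      by (auto split: split_indicator)
  qed
  also have "\<dots> \<le> ennreal ((2 * c)^DIM('a)) * ?J"
  proof -
    have "1 \<le> (2 * c)^DIM('a)"
      using c by (intro one_le_power) auto
    then have "1 \<le> ennreal ((2 * c)^DIM('a))"
      by (simp add: ennreal_1[symmetric] del: ennreal_1)
    then show ?thesis
      using mult_right_mono[of 1 _ ?J] by simp
  qed
  also have "\<dots> = 2^DIM('a) * (ennreal (\<bar>c\<bar>^DIM('a)) * ?J)"
    using c by (simp add: power_mult_distrib ennreal_mult ennreal_power[symmetric] mult.assoc)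
  also have "ennreal (\<bar>c\<bar>^DIM('a)) * ?J = (\<integral>\<^sup>+z. ?F z \<partial>lborel)"
    using c by (intro nn_integral_lborel_affine[symmetric]) auto
  finally show ?thesis .
qed

lemma nn_integral_convex_combination_le:
  fixes G :: "'a::euclidean_space \<Rightarrow> real" and Q :: "'a set"
  assumes "convex Q" and [measurable]: "Q \<in> sets borel" "G \<in> borel_measurable borel"
    and c: "1/2 \<le> c" "c \<le> 1"
  shows "(\<integral>\<^sup>+u\<in>Q. \<integral>\<^sup>+v\<in>Q. ennreal (G ((1 - c) *\<^sub>R u + c *\<^sub>R v)) \<partial>lborel \<partial>lborel)
          \<le> 2^DIM('a) * emeasure lborel Q * (\<integral>\<^sup>+z\<in>Q. ennreal (G z) \<partial>lborel)"
proof -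
  have "(\<integral>\<^sup>+u\<in>Q. \<integral>\<^sup>+v\<in>Q. ennreal (G ((1 - c) *\<^sub>R u + c *\<^sub>R v)) \<partial>lborel \<partial>lborel)
      \<le> (\<integral>\<^sup>+u\<in>Q. 2^DIM('a) * (\<integral>\<^sup>+z\<in>Q. ennreal (G z) \<partial>lborel) \<partial>lborel)"
    using nn_integral_convex_contraction_le[OF assms(1-3) _ c]
    by (intro nn_integral_mono) (auto split: split_indicator)
  also have "\<dots> = 2^DIM('a) * emeasure lborel Q * (\<integral>\<^sup>+z\<in>Q. ennreal (G z) \<partial>lborel)"
    by (subst nn_integral_cmult_indicator) (auto simp: mult_ac)
  finally show ?thesis .
qed

lemma sq_diff_le_nn_integral_segment:
  fixes \<psi> :: "'a::euclidean_space \<Rightarrow> real" and f' :: "'a \<Rightarrow> 'a \<Rightarrow>\<^sub>L real"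
  assumes d: "\<And>z. (\<psi> has_derivative blinfun_apply (f' z)) (at z)"
    and cf: "continuous_on UNIV f'" and cQ: "convex Q" and uv: "u \<in> Q" "v \<in> Q"
    and bnd: "\<And>z. z \<in> Q \<Longrightarrow> (f' z (u - v))^2 \<le> G z"
  shows "ennreal ((\<psi> u - \<psi> v)^2) \<le> (\<integral>\<^sup>+\<tau>\<in>{0<..<1}. ennreal (G (v + \<tau> *\<^sub>R (u - v))) \<partial>lborel)"
proof -
  let ?h = "\<lambda>\<tau>::real. (f' (v + \<tau> *\<^sub>R (u - v)) (u - v))^2"
  have ch: "continuous_on UNIV ?h"
    by (intro continuous_intros blinfun.continuous_on continuous_on_compose2[OF cf]) auto
  have "ennreal ((\<psi> u - \<psi> v)^2) \<le> ennreal (integral {0..1} ?h)"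
    by (intro ennreal_leI sq_diff_le_integral_segment[OF d cf])
  also have "\<dots> = (\<integral>\<^sup>+\<tau>\<in>{0<..<1}. ennreal (?h \<tau>) \<partial>lborel)"
    by (rule nn_integral_interval_continuous[symmetric, OF ch]) auto
  also have "\<dots> \<le> (\<integral>\<^sup>+\<tau>\<in>{0<..<1}. ennreal (G (v + \<tau> *\<^sub>R (u - v))) \<partial>lborel)"
  proof (intro nn_integral_mono)
    fix \<tau> :: real
    have "\<tau> \<in> {0<..<1} \<Longrightarrow> v + \<tau> *\<^sub>R (u - v) \<in> Q"
      using convexD[OF cQ uv(2,1), of "1 - \<tau>" \<tau>] by (auto simp: algebra_simps)
    then show "ennreal (?h \<tau>) * indicator {0<..<1} \<tau> \<le> ennreal (G (v + \<tau> *\<^sub>R (u - v))) * indicator {0<..<1} \<tau>"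
      using bnd by (auto split: split_indicator intro: ennreal_leI)
  qed
  finally show ?thesis .
qed

text \<open>The point \<open>v + \<tau> (u - v)\<close> gives weight \<open>\<ge> 1/2\<close> to \<open>u\<close> or to \<open>v\<close>; integrate over
  the other point first.\<close>

lemma nn_integral_segment_point_le:
  fixes G :: "'a::euclidean_space \<Rightarrow> real" and Q :: "'a set"
  assumes cQ: "convex Q" and [measurable]: "Q \<in> sets borel" "G \<in> borel_measurable borel"
    and \<tau>: "0 < \<tau>" "\<tau> < 1"
  shows "(\<integral>\<^sup>+u\<in>Q. \<integral>\<^sup>+v\<in>Q. ennreal (G (v + \<tau> *\<^sub>R (u - v))) \<partial>lborel \<partial>lborel)
          \<le> 2^DIM('a) * emeasure lborel Q * (\<integral>\<^sup>+z\<in>Q. ennreal (G z) \<partial>lborel)"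
proof (cases "\<tau> \<le> 1/2")
  case True
  have "(1 - (1 - \<tau>)) *\<^sub>R u + (1 - \<tau>) *\<^sub>R v = v + \<tau> *\<^sub>R (u - v)" for u v :: 'a
    by (simp add: algebra_simps)
  then show ?thesis
    using nn_integral_convex_combination_le[OF assms(1-3), of "1 - \<tau>"] True \<tau> by simp
next
  case False
  have [measurable]: "(\<lambda>p::'a \<times> 'a. snd p + \<tau> *\<^sub>R (fst p - snd p)) \<in> borel_measurable borel"
    by (intro borel_measurable_continuous_onI continuous_intros)
  have "(1 - \<tau>) *\<^sub>R v + \<tau> *\<^sub>R u = v + \<tau> *\<^sub>R (u - v)" for u v :: 'a
    by (simp add: algebra_simps)
  then have "(\<integral>\<^sup>+v\<in>Q. \<integral>\<^sup>+u\<in>Q. ennreal (G (v + \<tau> *\<^sub>R (u - v))) \<partial>lborel \<partial>lborel)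
      \<le> 2^DIM('a) * emeasure lborel Q * (\<integral>\<^sup>+z\<in>Q. ennreal (G z) \<partial>lborel)"
    using nn_integral_convex_combination_le[OF assms(1-3), of \<tau>] False \<tau> by simp
  moreover have "(\<integral>\<^sup>+u\<in>Q. \<integral>\<^sup>+v\<in>Q. ennreal (G (v + \<tau> *\<^sub>R (u - v))) \<partial>lborel \<partial>lborel)
      = (\<integral>\<^sup>+v\<in>Q. \<integral>\<^sup>+u\<in>Q. ennreal (G (v + \<tau> *\<^sub>R (u - v))) \<partial>lborel \<partial>lborel)"
    by (rule set_nn_integral_swap) measurable
  ultimately show ?thesis by simp
qed

theorem poincare_convex:
  fixes \<psi> :: "'a::euclidean_space \<Rightarrow> real" and f' :: "'a \<Rightarrow> 'a \<Rightarrow>\<^sub>L real"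
    and Q :: "'a set" and G :: "'a \<Rightarrow> real"
  assumes d: "\<And>z. (\<psi> has_derivative blinfun_apply (f' z)) (at z)"
    and cf: "continuous_on UNIV f'"
    and cQ: "convex Q" and [measurable]: "Q \<in> sets borel" "G \<in> borel_measurable borel"
    and bnd: "\<And>u v z. u \<in> Q \<Longrightarrow> v \<in> Q \<Longrightarrow> z \<in> Q \<Longrightarrow> (f' z (u - v))^2 \<le> G z"
  shows "(\<integral>\<^sup>+u\<in>Q. \<integral>\<^sup>+v\<in>Q. ennreal ((\<psi> u - \<psi> v)^2) \<partial>lborel \<partial>lborel)
         \<le> 2^DIM('a) * emeasure lborel Q * (\<integral>\<^sup>+z\<in>Q. ennreal (G z) \<partial>lborel)"
    (is "_ \<le> ?S")
proof -
  let ?K = "\<lambda>\<tau> u v. ennreal (G (v + \<tau> *\<^sub>R (u - v))) * indicator {0<..<1::real} \<tau> * indicator Q v * indicator Q u"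
  have [measurable]: "(\<lambda>p::'a \<times> 'a. snd p + \<tau> *\<^sub>R (fst p - snd p)) \<in> borel_measurable borel" for \<tau>
    by (intro borel_measurable_continuous_onI continuous_intros)
  have [measurable]: "\<psi> \<in> borel_measurable borel"
    using d by (intro borel_measurable_continuous_onI continuous_at_imp_continuous_on)
       (blast intro: has_derivative_continuous)
  have segment: "ennreal ((\<psi> u - \<psi> v)^2) * indicator Q v * indicator Q u \<le> (\<integral>\<^sup>+\<tau>. ?K \<tau> u v \<partial>lborel)" for u v
    using sq_diff_le_nn_integral_segment[OF d cf cQ, of u v G] bnd[of u v]
    by (cases "u \<in> Q \<and> v \<in> Q") (auto simp: nn_integral_multc)
  have "(\<integral>\<^sup>+u\<in>Q. \<integral>\<^sup>+v\<in>Q. ennreal ((\<psi> u - \<psi> v)^2) \<partial>lborel \<partial>lborel)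
      = (\<integral>\<^sup>+u. \<integral>\<^sup>+v. ennreal ((\<psi> u - \<psi> v)^2) * indicator Q v * indicator Q u \<partial>lborel \<partial>lborel)"
    by (rule set_nn_integral_nested) measurable
  also have "\<dots> \<le> (\<integral>\<^sup>+u. \<integral>\<^sup>+v. \<integral>\<^sup>+\<tau>. ?K \<tau> u v \<partial>lborel \<partial>lborel \<partial>lborel)"
    by (intro nn_integral_mono segment)
  also have "\<dots> = (\<integral>\<^sup>+\<tau>. \<integral>\<^sup>+u. \<integral>\<^sup>+v. ?K \<tau> u v \<partial>lborel \<partial>lborel \<partial>lborel)"
    by (subst nn_integral_cong[OF lborel_pair.Fubini'[symmetric]], measurable)
       (intro lborel_pair.Fubini'[symmetric], measurable)
  also have "\<dots> \<le> (\<integral>\<^sup>+\<tau>\<in>{0<..<1::real}. ?S \<partial>lborel)"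
  proof (intro nn_integral_mono)
    fix \<tau> :: real
    have "(\<integral>\<^sup>+u. \<integral>\<^sup>+v. ?K \<tau> u v \<partial>lborel \<partial>lborel)
        = (\<integral>\<^sup>+u\<in>Q. \<integral>\<^sup>+v\<in>Q. ennreal (G (v + \<tau> *\<^sub>R (u - v))) \<partial>lborel \<partial>lborel) * indicator {0<..<1} \<tau>"
      by (subst set_nn_integral_nested, measurable)
         (auto simp: mult_ac intro!: nn_integral_cong split: split_indicator)
    then show "(\<integral>\<^sup>+u. \<integral>\<^sup>+v. ?K \<tau> u v \<partial>lborel \<partial>lborel) \<le> ?S * indicator {0<..<1} \<tau>"
      using nn_integral_segment_point_le[OF cQ \<open>Q \<in> _\<close> \<open>G \<in> _\<close>, of \<tau>] by (auto split: split_indicator)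
  qed
  also have "\<dots> = ?S"
    by (subst nn_integral_cmult_indicator) auto
  finally show ?thesis .
qed

definition cube :: "real \<Rightarrow> (real^'m::finite) set" where
  "cube B = box (- (\<chi> i. B)) (\<chi> i. B)"

lemma mem_cube: "y \<in> cube B \<longleftrightarrow> (\<forall>i. \<bar>y $ i\<bar> < B)"
  unfolding cube_def mem_box_cart by (simp add: abs_less_iff) (meson minus_less_iff)

lemma open_cube: "open (cube B)" and bounded_cube: "bounded (cube B)" and convex_cube: "convex (cube B)"
  unfolding cube_def by (auto simp: bounded_box convex_box)

lemma sets_cube [measurable]: "cube B \<in> sets borel"
  by (simp add: open_cube)

lemma emeasure_cube:
  assumes "B > 0"
  shows "emeasure lborel (cube B :: (real^'m::finite) set) = ennreal ((2 * B) ^ CARD('m))"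
proof -
  have "emeasure lborel (cube B :: (real^'m) set) = ennreal (\<Prod>b\<in>Basis. ((\<chi> i. B) - (- (\<chi> i. B))) \<bullet> (b::real^'m))"
    unfolding cube_def emeasure_lborel_box_eq using assms by (auto simp: inner_axis Basis_vec_def)
  also have "\<dots> = ennreal (\<Prod>b\<in>(Basis::(real^'m) set). 2 * B)"
    by (intro arg_cong[where f=ennreal] prod.cong) (auto simp: inner_axis Basis_vec_def)
  finally show ?thesis by simp
qed

lemma norm_diff_sq_le_cube:
  fixes u v :: "real^'m::finite"
  assumes "u \<in> cube B" "v \<in> cube B"
  shows "(norm (u - v))^2 \<le> 4 * real CARD('m) * B^2"
proof -
  have "(norm (u - v))^2 = (\<Sum>i\<in>UNIV. ((u - v) $ i)^2)"
    unfolding power2_norm_eq_inner inner_vec_def by (simp add: power2_eq_square)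
  also have "\<dots> \<le> (\<Sum>i\<in>(UNIV::'m set). (2 * B)^2)"
  proof (rule sum_mono)
    fix i
    have "\<bar>(u - v) $ i\<bar> \<le> 2 * B"
      using assms unfolding mem_cube by (smt (verit) vector_minus_component)
    then show "((u - v) $ i)^2 \<le> (2 * B)^2"
      by (metis abs_ge_zero power2_abs power_mono)
  qed
  finally show ?thesis by (simp add: power2_eq_square)
qed

definition slab :: "real \<Rightarrow> real \<Rightarrow> real \<Rightarrow> 'm::finite pt set" where
  "slab a b B = {a<..<b} \<times> cube B"

lemma open_slab: "open (slab a b B)" and bounded_slab: "bounded (slab a b B)"
  unfolding slab_def by (auto intro!: open_Times bounded_Times simp: open_cube bounded_cube)

lemma sets_slab [measurable]: "slab a b B \<in> sets borel"
  by (simp add: open_slab)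

lemma indicator_slab: "indicator (slab a b B) (x1, x2) = (indicator {a<..<b} x1 * indicator (cube B) x2 :: ennreal)"
  unfolding slab_def by (simp add: indicator_times)

lemma emeasure_slab:
  "a \<le> b \<Longrightarrow> emeasure lborel (slab a b B :: 'm::finite pt set) = ennreal (b - a) * emeasure lborel (cube B :: (real^'m) set)"
  unfolding slab_def
  by (subst lborel_prod[symmetric], subst lborel.emeasure_pair_measure_Times)
     (auto simp: open_cube)

lemma nn_integral_slab:
  fixes F :: "'m::finite pt \<Rightarrow> ennreal"
  assumes F: "F \<in> borel_measurable borel"
  shows "(\<integral>\<^sup>+x\<in>slab a b B. F x \<partial>lborel) = (\<integral>\<^sup>+x1\<in>{a<..<b}. \<integral>\<^sup>+x2\<in>cube B. F (x1, x2) \<partial>lborel \<partial>lborel)"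
    and "(\<integral>\<^sup>+x\<in>slab a b B. F x \<partial>lborel) = (\<integral>\<^sup>+x2\<in>cube B. \<integral>\<^sup>+x1\<in>{a<..<b}. F (x1, x2) \<partial>lborel \<partial>lborel)"
proof -
  have [measurable]: "(\<lambda>x2. F (x1, x2)) \<in> borel_measurable borel" "(\<lambda>x1. F (x1, x2)) \<in> borel_measurable borel" for x1 x2
    by (rule measurable_compose[OF _ F], intro borel_measurable_continuous_onI continuous_intros)+
  show "(\<integral>\<^sup>+x\<in>slab a b B. F x \<partial>lborel) = (\<integral>\<^sup>+x1\<in>{a<..<b}. \<integral>\<^sup>+x2\<in>cube B. F (x1, x2) \<partial>lborel \<partial>lborel)"
    using F by (subst nn_integral_lborel_pair_fst, measurable)
      (intro nn_integral_cong, subst nn_integral_multc[symmetric], measurable,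
       auto intro!: nn_integral_cong simp: indicator_slab mult_ac)
  show "(\<integral>\<^sup>+x\<in>slab a b B. F x \<partial>lborel) = (\<integral>\<^sup>+x2\<in>cube B. \<integral>\<^sup>+x1\<in>{a<..<b}. F (x1, x2) \<partial>lborel \<partial>lborel)"
    using F by (subst nn_integral_lborel_pair_snd, measurable)
      (intro nn_integral_cong, subst nn_integral_multc[symmetric], measurable,
       auto intro!: nn_integral_cong simp: indicator_slab mult_ac)
qed

lemma has_real_derivative_partial_fst:
  fixes \<phi> :: "real \<times> 'b::real_normed_vector \<Rightarrow> real"
  assumes "(\<phi> has_derivative blinfun_apply L) (at (s, y))"
  shows "((\<lambda>s. \<phi> (s, y)) has_real_derivative L (1, 0)) (at s)"
proof -
  have "((\<lambda>s. (s, y)) has_derivative (\<lambda>h. (h, 0))) (at s)"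
    by (rule derivative_eq_intros refl)+
  from has_derivative_compose[OF this assms]
  have "((\<lambda>s. \<phi> (s, y)) has_derivative (\<lambda>h. L (h, 0))) (at s)"
    by (simp add: o_def)
  moreover have "(\<lambda>h. L (h, 0)) = (*) (L (1, 0))"
  proof
    fix h :: real
    have "(h, 0::'b) = h *\<^sub>R (1, 0)" by simp
    then show "L (h, 0) = L (1, 0) * h"
      by (metis blinfun.scaleR_right real_scaleR_def mult.commute)
  qed
  ultimately show ?thesis
    unfolding has_field_derivative_def by simp
qed

lift_definition Pair0_blinfun :: "'b::real_normed_vector \<Rightarrow>\<^sub>L (real \<times> 'b)" is "\<lambda>h. (0, h)"
  by (intro bounded_linear_Pair bounded_linear_zero bounded_linear_ident)

lemma has_derivative_partial_snd:
  fixes \<phi> :: "real \<times> 'b::real_normed_vector \<Rightarrow> real"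
  assumes "(\<phi> has_derivative blinfun_apply L) (at (w, z))"
  shows "((\<lambda>z. \<phi> (w, z)) has_derivative blinfun_apply (L o\<^sub>L Pair0_blinfun)) (at z)"
proof -
  have "((\<lambda>z. (w, z)) has_derivative (\<lambda>h. (0, h))) (at z)"
    by (rule derivative_eq_intros refl)+
  from has_derivative_compose[OF this assms]
  have "((\<lambda>z. \<phi> (w, z)) has_derivative (\<lambda>h. L (0, h))) (at z)"
    by (simp add: o_def)
  moreover have "blinfun_apply (L o\<^sub>L Pair0_blinfun) = (\<lambda>h. L (0, h))"
    by (rule ext) (simp add: Pair0_blinfun.rep_eq)
  ultimately show ?thesis
    by simp
qed

lemma partial_snd_sq_le:
  fixes L :: "(real \<times> 'b::euclidean_space) \<Rightarrow>\<^sub>L real"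
  shows "(L (0, h))^2 \<le> (norm h)^2 * (\<Sum>i\<in>Basis. (L (0, i))^2)"
proof -
  have "(\<Sum>i\<in>Basis. (h \<bullet> i) *\<^sub>R (0::real, i)) = (0, \<Sum>i\<in>Basis. (h \<bullet> i) *\<^sub>R i)"
    by (rule prod_eqI) (simp_all add: fst_sum snd_sum)
  then have "L (0, h) = (\<Sum>i\<in>Basis. L ((h \<bullet> i) *\<^sub>R (0::real, i)))"
    by (metis blinfun.sum_right euclidean_representation)
  also have "\<dots> = (\<Sum>i\<in>Basis. (h \<bullet> i) * L (0, i))"
    by (simp only: blinfun.scaleR_right real_scaleR_def)
  finally have "(L (0, h))^2 \<le> (\<Sum>i\<in>Basis. (h \<bullet> i)^2) * (\<Sum>i\<in>Basis. (L (0, i))^2)"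
    by (simp add: Cauchy_Schwarz_ineq_sum)
  moreover have "(\<Sum>i\<in>Basis. (h \<bullet> i)^2) = (norm h)^2"
    unfolding power2_norm_eq_inner euclidean_inner[of h h] by (simp add: power2_eq_square)
  ultimately show ?thesis by simp
qed

text \<open>\<open>side1 = t^(\<alpha>,\<alpha>')\<close> and \<open>side2 = t^(\<beta>,\<beta>')\<close> are the half-sides of \<open>C\<^sub>t\<close> in the
  \<open>x\<^sub>1\<close> and \<open>x\<^sub>2\<close> directions.\<close>

definition side1 :: "real \<Rightarrow> real \<Rightarrow> real \<Rightarrow> real" where
  "side1 \<delta> \<delta>' t = ppow t (1 / (1 - \<delta>)) (1 / (1 - \<delta>'))"

definition side2 :: "real \<Rightarrow> real \<Rightarrow> real \<Rightarrow> real \<Rightarrow> real \<Rightarrow> real" where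
  "side2 \<delta> \<delta>' \<epsilon> \<epsilon>' t = ppow t ((1 + \<epsilon> - \<delta>) * (1 / (1 - \<delta>))) ((1 + \<epsilon>' - \<delta>') * (1 / (1 - \<delta>')))"

lemma ppow_nonneg: "0 \<le> ppow a p p'"
  unfolding ppow_def by simp

lemma side1_pos: "0 < t \<Longrightarrow> 0 < side1 \<delta> \<delta>' t"
  and side2_pos: "0 < t \<Longrightarrow> 0 < side2 \<delta> \<delta>' \<epsilon> \<epsilon>' t"
  unfolding side1_def side2_def ppow_def by simp_all

lemma sq_le_powr_weight:
  fixes t d y :: real
  assumes "0 < t" "0 \<le> d" "d < 1" "0 < y" "y \<le> t powr (1 / (1 - d))"
  shows "y^2 \<le> t^2 * y powr (2 * d)"
proof -
  have "1 / (1 - d) * (2 - 2 * d) = 2"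
    using assms by (simp add: field_simps)
  then have "(t powr (1 / (1 - d))) powr (2 - 2 * d) = t^2"
    using assms by (simp only: powr_powr) (simp add: powr_numeral)
  moreover have "y^2 = y powr (2 * d) * y powr (2 - 2 * d)"
    using assms by (simp add: powr_add[symmetric] powr_numeral)
  moreover have "y powr (2 - 2 * d) \<le> (t powr (1 / (1 - d))) powr (2 - 2 * d)"
    using assms by (intro powr_mono2) auto
  ultimately show ?thesis
    by (metis mult.commute mult_left_mono powr_ge_zero)
qed

lemma sq_le_ppow_weight:
  fixes t d d' y :: real
  assumes t: "0 < t" and d: "0 \<le> d" "d < 1" "0 \<le> d'" "d' < 1" and y: "0 < y" "y < side1 d d' t"
  shows "y^2 \<le> t^2 * ppow y (2 * d) (2 * d')"
proof (cases "y \<le> 1")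
  case True
  have "y \<le> t powr (1 / (1 - d))"
  proof (cases "t \<le> 1")
    case False
    then have "1 \<le> t powr (1 / (1 - d))"
      using d by (simp add: ge_one_powr_ge_zero)
    with True show ?thesis by linarith
  qed (use y in \<open>auto simp: side1_def ppow_def\<close>)
  then show ?thesis
    using True sq_le_powr_weight[OF t d(1,2) y(1)] by (simp add: ppow_def)
next
  case False
  have "\<not> t \<le> 1"
  proof
    assume "t \<le> 1"
    then have "t powr (1 / (1 - d)) \<le> 1"
      using t d by (simp add: powr_le1)
    with y False show False by (simp add: side1_def ppow_def \<open>t \<le> 1\<close>)
  qed
  then have "y \<le> t powr (1 / (1 - d'))"
    using y by (simp add: side1_def ppow_def)
  then show ?thesis
    using False sq_le_powr_weight[OF t d(3,4) y(1)] by (simp add: ppow_def)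
qed

lemma side2_sq:
  fixes t d d' e e' :: real
  assumes t: "0 < t" and d: "d < 1" "d' < 1"
  shows "(side2 d d' e e' t)^2 = t^2 * ppow (side1 d d' t) (2 * e) (2 * e')"
proof -
  have sq: "(t powr ((1 + e - d) * (1 / (1 - d))))^2 = t^2 * (t powr (1 / (1 - d))) powr (2 * e)"
    if "d < 1" for d e
  proof -
    have "(t powr ((1 + e - d) * (1 / (1 - d))))^2 = t powr (2 * ((1 + e - d) * (1 / (1 - d))))"
      using t by (simp add: powr_numeral[symmetric] powr_powr mult.commute)
    also have "2 * ((1 + e - d) * (1 / (1 - d))) = 2 + 1 / (1 - d) * (2 * e)"
      using that by (simp add: field_simps)
    also have "t powr (2 + 1 / (1 - d) * (2 * e)) = t^2 * (t powr (1 / (1 - d))) powr (2 * e)"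
      using t by (simp add: powr_add powr_powr powr_numeral)
    finally show ?thesis .
  qed
  show ?thesis
  proof (cases "t \<le> 1")
    case True
    then have "t powr (1 / (1 - d)) \<le> 1"
      using t d by (simp add: powr_le1)
    then show ?thesis
      using True sq[OF d(1)] by (simp add: side1_def side2_def ppow_def)
  next
    case False
    then have "1 \<le> t powr (1 / (1 - d'))"
      using d by (simp add: ge_one_powr_ge_zero)
    then show ?thesis
      using False sq[OF d(2)] by (auto simp: side1_def side2_def ppow_def)
  qed
qed

lemma ppow_le_doubling:
  fixes A y p p' :: real
  assumes "0 < A" "A \<le> 2 * y" "y \<le> A" "0 \<le> p" "0 \<le> p'"
  shows "ppow A p p' \<le> 2 powr (p + p') * ppow y p p'"
proof -
  have double: "A powr q \<le> 2 powr q * y powr q" if "0 \<le> q" for q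
  proof -
    have "A powr q \<le> (2 * y) powr q"
      using assms that by (intro powr_mono2) auto
    then show ?thesis
      using assms by (simp add: powr_mult)
  qed
  have grow: "2 powr q \<le> 2 powr (p + p')" if "q \<in> {p, p'}" for q
    using that assms by (intro powr_mono) auto
  consider "A \<le> 1" | "1 < A" "y \<le> 1" | "1 < y"
    using assms by linarith
  then show ?thesis
  proof cases
    case 1
    have eq: "ppow A p p' = A powr p" "ppow y p p' = y powr p"
      using assms 1 by (simp_all add: ppow_def)
    have "2 powr p * y powr p \<le> 2 powr (p + p') * y powr p"
      by (intro mult_right_mono grow) auto
    then show ?thesis
      unfolding eq using double[OF assms(4)] by linarith
  next
    case 2
    have "A powr p' \<le> 2 powr p'"
      using assms 2 by (intro powr_mono2) auto
    also have "\<dots> = 2 powr (p + p') * (1/2) powr p"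
      by (simp add: powr_add powr_divide)
    also have "\<dots> \<le> 2 powr (p + p') * y powr p"
      using assms 2 by (intro mult_left_mono powr_mono2) auto
    finally show ?thesis
      using 2 by (simp add: ppow_def)
  next
    case 3
    have eq: "ppow A p p' = A powr p'" "ppow y p p' = y powr p'"
      using assms 3 by (simp_all add: ppow_def)
    have "2 powr p' * y powr p' \<le> 2 powr (p + p') * y powr p'"
      by (intro mult_right_mono grow) auto
    then show ?thesis
      unfolding eq using double[OF assms(5)] by linarith
  qed
qed

lemma side2_sq_le_ppow_weight:
  fixes t d d' e e' y :: real
  assumes "0 < t" "d < 1" "d' < 1" "0 \<le> e" "0 \<le> e'"
    and "side1 d d' t / 2 \<le> y" "y \<le> side1 d d' t"
  shows "(side2 d d' e e' t)^2 \<le> 2 powr (2 * e + 2 * e') * t^2 * ppow y (2 * e) (2 * e')"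
proof -
  have "(side2 d d' e e' t)^2 = t^2 * ppow (side1 d d' t) (2 * e) (2 * e')"
    using assms by (intro side2_sq)
  also have "\<dots> \<le> t^2 * (2 powr (2 * e + 2 * e') * ppow y (2 * e) (2 * e'))"
    using assms side1_pos[OF \<open>0 < t\<close>, of d d'] by (intro mult_left_mono ppow_le_doubling) auto
  finally show ?thesis
    by (simp only: mult_ac)
qed

lemma ppow_le_one_plus:
  assumes "0 \<le> y" "y \<le> A" "0 \<le> p" "0 \<le> p'"
  shows "ppow y p p' \<le> 1 + A powr p'"
proof (cases "y \<le> 1")
  case True
  have "y powr p \<le> 1" using True assms by (simp add: powr_le1)
  thus ?thesis using True unfolding ppow_def by (simp add: add_increasing2)
next
  case False
  have "y powr p' \<le> A powr p'" by (rule powr_mono2) (use assms False in auto)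
  thus ?thesis using False unfolding ppow_def by simp
qed

lemma borel_measurable_ppow_abs_fst [measurable]:
  "(\<lambda>x::real \<times> (real^'m::finite). ppow \<bar>fst x\<bar> p p') \<in> borel_measurable borel"
  unfolding ppow_def by measurable

section \<open>A Poincar\'e inequality on slabs\<close>

lemma weighted_energy_le:
  fixes C c t y p g w1 w2 B2 :: real
  assumes "0 \<le> C" "0 \<le> c" "0 \<le> w1" "0 \<le> w2" "0 \<le> p" "0 \<le> g"
    and y: "y \<le> t^2 * w1" and B2: "B2 \<le> c * t^2 * w2"
  shows "8 * (y * p) + C * B2 * g \<le> (8 + C * c) * t^2 * (w1 * p + w2 * g)"
proof -
  have "8 * (y * p) \<le> 8 * (t^2 * w1 * p)"
    using y assms by (intro mult_left_mono mult_right_mono) auto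
  moreover have "C * (B2 * g) \<le> C * ((c * t^2 * w2) * g)"
    using B2 assms by (intro mult_left_mono mult_right_mono) auto
  moreover have "0 \<le> 8 * (t^2 * w2 * g) + C * c * (t^2 * w1 * p)"
    using assms by simp
  moreover have "(8 + C * c) * t^2 * (w1 * p + w2 * g)
      = 8 * (t^2 * w1 * p) + C * ((c * t^2 * w2) * g) + (8 * (t^2 * w2 * g) + C * c * (t^2 * w1 * p))"
    by (simp add: algebra_simps)
  ultimately show ?thesis
    by (simp add: mult.assoc)
qed

context
  fixes \<phi> :: "'m::finite pt \<Rightarrow> real" and f' :: "'m pt \<Rightarrow> 'm pt \<Rightarrow>\<^sub>L real"
  assumes deriv: "\<And>x. (\<phi> has_derivative blinfun_apply (f' x)) (at x)"
    and deriv_cont: "continuous_on UNIV f'"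
begin

lemma d1_eq: "d1 \<phi> x = f' x (1, 0)"
  unfolding d1_def frechet_derivative_at[OF deriv, symmetric] ..

lemma grad2sq_eq: "grad2sq \<phi> x = (\<Sum>i\<in>Basis. (f' x (0, i))^2)"
  unfolding grad2sq_def frechet_derivative_at[OF deriv, symmetric] ..

lemma grad2sq_nonneg: "0 \<le> grad2sq \<phi> x"
  unfolding grad2sq_def by (simp add: sum_nonneg)

lemma continuous_on_phi: "continuous_on UNIV \<phi>"
  using deriv by (meson has_derivative_continuous continuous_at_imp_continuous_on)

lemma continuous_on_d1: "continuous_on UNIV (d1 \<phi>)"
  unfolding d1_eq[abs_def] by (intro continuous_intros blinfun.continuous_on deriv_cont)

lemma continuous_on_grad2sq: "continuous_on UNIV (grad2sq \<phi>)"
  unfolding grad2sq_eq[abs_def] by (intro continuous_intros blinfun.continuous_on deriv_cont)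

lemma borel_measurable_phi [measurable]: "\<phi> \<in> borel_measurable borel"
  and borel_measurable_d1 [measurable]: "d1 \<phi> \<in> borel_measurable borel"
  and borel_measurable_grad2sq [measurable]: "grad2sq \<phi> \<in> borel_measurable borel"
  by (intro borel_measurable_continuous_onI continuous_on_phi continuous_on_d1 continuous_on_grad2sq)+

lemma borel_measurable_phi_pair [measurable]: "\<phi> \<in> borel_measurable (borel \<Otimes>\<^sub>M borel)"
  by (simp add: borel_prod)

lemma slab_hardy_fst:
  assumes "a \<le> s" "s \<le> b" "0 \<notin> {a<..<b}" "\<bar>(a + b) / 2\<bar> \<le> \<bar>s\<bar>"
  shows "(\<integral>\<^sup>+x\<in>slab a b B. ennreal ((\<phi> x - \<phi> (s, snd x))^2) \<partial>lborel)
           \<le> 4 * (\<integral>\<^sup>+x\<in>slab a b B. ennreal ((fst x)^2 * (d1 \<phi> x)^2) \<partial>lborel)"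
proof -
  have fiber: "(\<integral>\<^sup>+x1\<in>{a<..<b}. ennreal ((\<phi> (x1, x2) - \<phi> (s, x2))^2) \<partial>lborel)
      \<le> 4 * (\<integral>\<^sup>+x1\<in>{a<..<b}. ennreal (x1^2 * (d1 \<phi> (x1, x2))^2) \<partial>lborel)" for x2
  proof -
    let ?g = "\<lambda>x1. \<phi> (x1, x2)" and ?g' = "\<lambda>x1. d1 \<phi> (x1, x2)"
    have g: "(?g has_real_derivative ?g' x1) (at x1)" for x1
      unfolding d1_eq by (rule has_real_derivative_partial_fst[OF deriv])
    have cg': "continuous_on UNIV ?g'"
      by (intro continuous_on_compose2[OF continuous_on_d1] continuous_intros) auto
    have cg: "continuous_on UNIV ?g"
      by (intro continuous_on_compose2[OF continuous_on_phi] continuous_intros) auto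
    have cw: "continuous_on UNIV (\<lambda>x1. x1^2 * (?g' x1)^2)"
      by (intro continuous_intros cg')
    have "(\<integral>\<^sup>+x1\<in>{a<..<b}. ennreal ((?g x1 - ?g s)^2) \<partial>lborel) = ennreal (integral {a..b} (\<lambda>x1. (?g x1 - ?g s)^2))"
      using assms by (intro nn_integral_interval_continuous continuous_intros cg) auto
    also have "\<dots> \<le> ennreal (4 * integral {a..b} (\<lambda>x1. x1^2 * (?g' x1)^2))"
      by (intro ennreal_leI hardy_inequality_far_point[OF assms g cg'])
    also have "\<dots> = 4 * (\<integral>\<^sup>+x1\<in>{a<..<b}. ennreal (x1^2 * (?g' x1)^2) \<partial>lborel)"
      using assms by (subst nn_integral_interval_continuous) (auto intro: cw simp: ennreal_mult')
    finally show ?thesis .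
  qed
  have "(\<integral>\<^sup>+x\<in>slab a b B. ennreal ((\<phi> x - \<phi> (s, snd x))^2) \<partial>lborel)
      = (\<integral>\<^sup>+x2\<in>cube B. \<integral>\<^sup>+x1\<in>{a<..<b}. ennreal ((\<phi> (x1, x2) - \<phi> (s, x2))^2) \<partial>lborel \<partial>lborel)"
    by (simp add: nn_integral_slab(2))
  also have "\<dots> \<le> (\<integral>\<^sup>+x2\<in>cube B. 4 * (\<integral>\<^sup>+x1\<in>{a<..<b}. ennreal (x1^2 * (d1 \<phi> (x1, x2))^2) \<partial>lborel) \<partial>lborel)"
    using fiber by (intro nn_integral_mono mult_right_mono) auto
  also have "\<dots> = 4 * (\<integral>\<^sup>+x\<in>slab a b B. ennreal ((fst x)^2 * (d1 \<phi> x)^2) \<partial>lborel)"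
    by (simp add: nn_integral_slab(2) mult.assoc nn_integral_cmult borel_measurable_nn_integral_lborel_snd)
  finally show ?thesis .
qed

lemma cube_poincare_slice:
  fixes B s :: real
  shows "(\<integral>\<^sup>+u\<in>cube B. \<integral>\<^sup>+v\<in>cube B. ennreal ((\<phi> (s, u) - \<phi> (s, v))^2) \<partial>lborel \<partial>lborel)
     \<le> 2^CARD('m) * emeasure lborel (cube B :: (real^'m) set) * ennreal (4 * real CARD('m) * B^2)
         * (\<integral>\<^sup>+z\<in>cube B. ennreal (grad2sq \<phi> (s, z)) \<partial>lborel)"
proof -
  let ?G = "\<lambda>z. 4 * real CARD('m) * B^2 * grad2sq \<phi> (s, z)"
  have "(\<integral>\<^sup>+u\<in>cube B. \<integral>\<^sup>+v\<in>cube B. ennreal ((\<phi> (s, u) - \<phi> (s, v))^2) \<partial>lborel \<partial>lborel)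
      \<le> 2^DIM(real^'m) * emeasure lborel (cube B :: (real^'m) set) * (\<integral>\<^sup>+z\<in>cube B. ennreal (?G z) \<partial>lborel)"
  proof (rule poincare_convex[where f'="\<lambda>z. f' (s, z) o\<^sub>L Pair0_blinfun" and \<psi>="\<lambda>z. \<phi> (s, z)" and Q="cube B"])
    show "((\<lambda>z. \<phi> (s, z)) has_derivative blinfun_apply (f' (s, z) o\<^sub>L Pair0_blinfun)) (at z)" for z
      by (rule has_derivative_partial_snd[OF deriv])
    show "continuous_on UNIV (\<lambda>z. f' (s, z) o\<^sub>L Pair0_blinfun)"
      by (intro continuous_intros continuous_on_compose2[OF deriv_cont]) auto
    show "(\<lambda>z. 4 * real CARD('m) * B^2 * grad2sq \<phi> (s, z)) \<in> borel_measurable borel"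
      by measurable
    fix u v z :: "real^'m"
    assume "u \<in> cube B" "v \<in> cube B"
    then have "(f' (s, z) (0, u - v))^2 \<le> (norm (u - v))^2 * grad2sq \<phi> (s, z)"
      "(norm (u - v))^2 * grad2sq \<phi> (s, z) \<le> ?G z"
      using partial_snd_sq_le norm_diff_sq_le_cube grad2sq_nonneg
      by (auto simp: grad2sq_eq intro!: mult_right_mono)
    then show "(blinfun_apply (f' (s, z) o\<^sub>L Pair0_blinfun) (u - v))^2 \<le> ?G z"
      by (simp add: Pair0_blinfun.rep_eq)
  qed (auto simp: convex_cube)
  also have "(\<integral>\<^sup>+z\<in>cube B. ennreal (?G z) \<partial>lborel)
      = ennreal (4 * real CARD('m) * B^2) * (\<integral>\<^sup>+z\<in>cube B. ennreal (grad2sq \<phi> (s, z)) \<partial>lborel)"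
    by (subst nn_integral_cmult[symmetric])
       (auto simp: ennreal_mult' mult.assoc grad2sq_nonneg intro!: nn_integral_cong)
  finally show ?thesis
    by (simp add: mult.assoc)
qed

lemma slab_poincare_snd:
  fixes a b a' b' B :: real
  assumes "a \<le> b"
  shows "(\<integral>\<^sup>+w\<in>slab a' b' B. \<integral>\<^sup>+x\<in>slab a b B. ennreal ((\<phi> (fst w, snd x) - \<phi> w)^2) \<partial>lborel \<partial>lborel)
     \<le> emeasure lborel (slab a b B :: 'm pt set) * 2^CARD('m) * ennreal (4 * real CARD('m) * B^2)
         * (\<integral>\<^sup>+x\<in>slab a' b' B. ennreal (grad2sq \<phi> x) \<partial>lborel)"
proof -
  define Y where "Y w = (\<integral>\<^sup>+z\<in>cube B. ennreal ((\<phi> (fst w, z) - \<phi> w)^2) \<partial>lborel)" for w :: "'m pt"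
  have [measurable]: "Y \<in> borel_measurable borel"
  proof -
    have "(\<lambda>p. ennreal ((\<phi> (fst (fst p), snd p) - \<phi> (fst p))^2) * indicator (cube B) (snd p))
        \<in> borel_measurable (borel :: ('m pt \<times> (real^'m)) measure)"
      by measurable
    from borel_measurable_nn_integral_lborel_fst[OF this] show ?thesis
      unfolding Y_def by simp
  qed
  have inner: "(\<integral>\<^sup>+x\<in>slab a b B. ennreal ((\<phi> (fst w, snd x) - \<phi> w)^2) \<partial>lborel) = ennreal (b - a) * Y w" for w
  proof -
    have "(\<integral>\<^sup>+x\<in>slab a b B. ennreal ((\<phi> (fst w, snd x) - \<phi> w)^2) \<partial>lborel) = (\<integral>\<^sup>+x1\<in>{a<..<b}. Y w \<partial>lborel)"
      by (simp add: nn_integral_slab(1) Y_def)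
    also have "\<dots> = ennreal (b - a) * Y w"
      using nn_integral_cmult_indicator[of "{a<..<b}" lborel "Y w"] assms by (simp add: mult.commute)
    finally show ?thesis .
  qed
  have "(\<integral>\<^sup>+w\<in>slab a' b' B. Y w \<partial>lborel)
      = (\<integral>\<^sup>+w1\<in>{a'<..<b'}. \<integral>\<^sup>+w2\<in>cube B. \<integral>\<^sup>+z\<in>cube B. ennreal ((\<phi> (w1, w2) - \<phi> (w1, z))^2) \<partial>lborel \<partial>lborel \<partial>lborel)"
    by (simp add: nn_integral_slab(1) Y_def power2_commute)
  also have "\<dots> \<le> (\<integral>\<^sup>+w1\<in>{a'<..<b'}. 2^CARD('m) * emeasure lborel (cube B :: (real^'m) set) * ennreal (4 * real CARD('m) * B^2)
         * (\<integral>\<^sup>+z\<in>cube B. ennreal (grad2sq \<phi> (w1, z)) \<partial>lborel) \<partial>lborel)"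
    by (intro nn_integral_mono mult_right_mono cube_poincare_slice) simp
  also have "\<dots> = 2^CARD('m) * emeasure lborel (cube B :: (real^'m) set) * ennreal (4 * real CARD('m) * B^2)
         * (\<integral>\<^sup>+x\<in>slab a' b' B. ennreal (grad2sq \<phi> x) \<partial>lborel)"
    by (simp add: nn_integral_slab(1) mult.assoc nn_integral_cmult borel_measurable_nn_integral_lborel_fst)
  finally have bound: "(\<integral>\<^sup>+w\<in>slab a' b' B. Y w \<partial>lborel) \<le> \<dots>" .
  have "(\<integral>\<^sup>+w\<in>slab a' b' B. \<integral>\<^sup>+x\<in>slab a b B. ennreal ((\<phi> (fst w, snd x) - \<phi> w)^2) \<partial>lborel \<partial>lborel)
      = ennreal (b - a) * (\<integral>\<^sup>+w\<in>slab a' b' B. Y w \<partial>lborel)"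
    by (simp add: inner mult.assoc nn_integral_cmult)
  also have "\<dots> \<le> ennreal (b - a) * (2^CARD('m) * emeasure lborel (cube B :: (real^'m) set) * ennreal (4 * real CARD('m) * B^2)
         * (\<integral>\<^sup>+x\<in>slab a' b' B. ennreal (grad2sq \<phi> x) \<partial>lborel))"
    by (rule mult_left_mono[OF bound]) simp
  finally show ?thesis
    using assms by (simp add: emeasure_slab mult_ac)
qed

lemma slab_variance_le_moves:
  assumes "0 < measure lborel (slab a b B :: 'm pt set)"
  shows "ennreal (LINT x:slab a b B|lborel. (\<phi> x - (LINT y:slab a b B|lborel. \<phi> y) / measure lborel (slab a b B :: 'm pt set))^2)
     \<le> 2 * (\<integral>\<^sup>+x\<in>slab a b B. ennreal ((\<phi> x - \<phi> (fst w, snd x))^2) \<partial>lborel)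
       + 2 * (\<integral>\<^sup>+x\<in>slab a b B. ennreal ((\<phi> (fst w, snd x) - \<phi> w)^2) \<partial>lborel)"
proof -
  have sq: "(p + q)^2 \<le> 2 * p^2 + 2 * q^2" for p q :: real
    using sum_squares_bound[of p q] by (simp add: power2_eq_square algebra_simps)
  have "ennreal (LINT x:slab a b B|lborel. (\<phi> x - (LINT y:slab a b B|lborel. \<phi> y) / measure lborel (slab a b B :: 'm pt set))^2)
      \<le> (\<integral>\<^sup>+x\<in>slab a b B. ennreal ((\<phi> x - \<phi> w)^2) \<partial>lborel)"
    using assms by (intro mean_square_deviation_le_nn_integral continuous_on_phi) (auto simp: bounded_slab)
  also have "\<dots> \<le> (\<integral>\<^sup>+x. 2 * (ennreal ((\<phi> x - \<phi> (fst w, snd x))^2) * indicator (slab a b B) x)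
                        + 2 * (ennreal ((\<phi> (fst w, snd x) - \<phi> w)^2) * indicator (slab a b B) x) \<partial>lborel)"
  proof (intro nn_integral_mono)
    fix x
    have "ennreal ((\<phi> x - \<phi> w)^2)
        \<le> ennreal (2 * (\<phi> x - \<phi> (fst w, snd x))^2 + 2 * (\<phi> (fst w, snd x) - \<phi> w)^2)"
      using sq[of "\<phi> x - \<phi> (fst w, snd x)" "\<phi> (fst w, snd x) - \<phi> w"] by (intro ennreal_leI) simp
    then show "ennreal ((\<phi> x - \<phi> w)^2) * indicator (slab a b B) x
        \<le> 2 * (ennreal ((\<phi> x - \<phi> (fst w, snd x))^2) * indicator (slab a b B) x)
          + 2 * (ennreal ((\<phi> (fst w, snd x) - \<phi> w)^2) * indicator (slab a b B) x)"
      by (auto simp: ennreal_plus ennreal_mult split: split_indicator)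
  qed
  also have "\<dots> = 2 * (\<integral>\<^sup>+x\<in>slab a b B. ennreal ((\<phi> x - \<phi> (fst w, snd x))^2) \<partial>lborel)
       + 2 * (\<integral>\<^sup>+x\<in>slab a b B. ennreal ((\<phi> (fst w, snd x) - \<phi> w)^2) \<partial>lborel)"
    by (simp add: nn_integral_add nn_integral_cmult)
  finally show ?thesis .
qed

lemma slab_hardy_fst_average:
  assumes "a \<le> a'" "b' \<le> b" "0 \<notin> {a<..<b}" "\<And>s. s \<in> {a'<..<b'} \<Longrightarrow> \<bar>(a + b) / 2\<bar> \<le> \<bar>s\<bar>"
  shows "(\<integral>\<^sup>+w\<in>(slab a' b' B :: 'm pt set). \<integral>\<^sup>+x\<in>slab a b B. ennreal ((\<phi> x - \<phi> (fst w, snd x))^2) \<partial>lborel \<partial>lborel)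
     \<le> emeasure lborel (slab a' b' B :: 'm pt set) * (4 * (\<integral>\<^sup>+x\<in>slab a b B. ennreal ((fst x)^2 * (d1 \<phi> x)^2) \<partial>lborel))"
    (is "_ \<le> _ * ?H")
proof -
  have pointwise: "(\<integral>\<^sup>+x\<in>slab a b B. ennreal ((\<phi> x - \<phi> (fst w, snd x))^2) \<partial>lborel) \<le> ?H"
    if "w \<in> slab a' b' B" for w :: "'m pt"
    using that assms by (intro slab_hardy_fst) (auto simp: slab_def)
  have "(\<integral>\<^sup>+w\<in>(slab a' b' B :: 'm pt set). \<integral>\<^sup>+x\<in>slab a b B. ennreal ((\<phi> x - \<phi> (fst w, snd x))^2) \<partial>lborel \<partial>lborel)
      \<le> (\<integral>\<^sup>+w\<in>(slab a' b' B :: 'm pt set). ?H \<partial>lborel)"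
    by (rule nn_integral_mono) (auto split: split_indicator intro: pointwise)
  also have "\<dots> = ?H * emeasure lborel (slab a' b' B :: 'm pt set)"
    by (rule nn_integral_cmult_indicator) simp
  finally show ?thesis
    by (simp add: mult.commute)
qed

theorem slab_poincare:
  fixes a b a' b' B :: real
  assumes B: "0 < B" and a': "a \<le> a'" "a' < b'" and b': "b' \<le> b" and len: "b - a = 2 * (b' - a')"
    and zero: "0 \<notin> {a<..<b}" and far: "\<And>s. s \<in> {a'<..<b'} \<Longrightarrow> \<bar>(a + b) / 2\<bar> \<le> \<bar>s\<bar>"
  shows "ennreal (LINT x:slab a b B|lborel. (\<phi> x - (LINT y:slab a b B|lborel. \<phi> y) / measure lborel (slab a b B :: 'm pt set))^2)
     \<le> 8 * (\<integral>\<^sup>+x\<in>slab a b B. ennreal ((fst x)^2 * (d1 \<phi> x)^2) \<partial>lborel)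
       + ennreal (2^(CARD('m)+4) * real CARD('m) * B^2) * (\<integral>\<^sup>+x\<in>slab a' b' B. ennreal (grad2sq \<phi> x) \<partial>lborel)"
    (is "ennreal ?V \<le> 8 * ?J1 + ennreal ?c * ?J2")
proof -
  define R R' where "R = (slab a b B :: 'm pt set)" and "R' = (slab a' b' B :: 'm pt set)"
  define X1 where "X1 w = (\<integral>\<^sup>+x\<in>R. ennreal ((\<phi> x - \<phi> (fst w, snd x))^2) \<partial>lborel)" for w :: "'m pt"
  define X2 where "X2 w = (\<integral>\<^sup>+x\<in>R. ennreal ((\<phi> (fst w, snd x) - \<phi> w)^2) \<partial>lborel)" for w :: "'m pt"
  have "(\<lambda>p. ennreal ((\<phi> (snd p) - \<phi> (fst (fst p), snd (snd p)))^2) * indicator R (snd p))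
      \<in> borel_measurable (borel :: ('m pt \<times> 'm pt) measure)"
    "(\<lambda>p. ennreal ((\<phi> (fst (fst p), snd (snd p)) - \<phi> (fst p))^2) * indicator R (snd p))
      \<in> borel_measurable (borel :: ('m pt \<times> 'm pt) measure)"
    unfolding R_def by measurable
  from this[THEN borel_measurable_nn_integral_lborel_fst]
  have [measurable]: "X1 \<in> borel_measurable borel" "X2 \<in> borel_measurable borel"
    unfolding X1_def X2_def by simp_all
  define r where "r = (b' - a') * (2 * B)^CARD('m)"
  have "emeasure lborel R = ennreal ((b - a) * (2 * B)^CARD('m))"
    using a' b' B unfolding R_def by (simp add: emeasure_slab emeasure_cube ennreal_mult[symmetric])
  then have r: "0 < r" "emeasure lborel R' = ennreal r" "emeasure lborel R = ennreal (2 * r)"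
    using a' B unfolding r_def R'_def len
    by (simp_all add: emeasure_slab emeasure_cube ennreal_mult[symmetric] mult.assoc)
  have coeff: "2 * (ennreal (2 * r) * 2^CARD('m) * ennreal (4 * real CARD('m) * B^2)) = ennreal r * ennreal ?c"
  proof -
    have "2 * (ennreal (2 * r) * 2^CARD('m) * ennreal (4 * real CARD('m) * B^2))
        = ennreal (2 * (2 * r) * 2^CARD('m) * (4 * real CARD('m) * B^2))"
      using r ennreal_power[of 2 "CARD('m)"]
      by (simp only: ennreal_mult' ennreal_mult'' ennreal_numeral mult.assoc
          zero_le_numeral zero_le_power mult_nonneg_nonneg less_imp_le of_nat_0_le_iff zero_le_power2)
    also have "\<dots> = ennreal (r * ?c)"
      by (simp add: power_add mult_ac)
    finally show ?thesis
      using r by (simp add: ennreal_mult)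
  qed
  have "ennreal ?V * ennreal r = (\<integral>\<^sup>+w\<in>R'. ennreal ?V \<partial>lborel)"
    using r(2) unfolding R'_def by (simp add: nn_integral_cmult_indicator)
  also have "\<dots> \<le> (\<integral>\<^sup>+w\<in>R'. 2 * X1 w + 2 * X2 w \<partial>lborel)"
    using r unfolding X1_def X2_def R_def
    by (intro nn_integral_mono mult_right_mono slab_variance_le_moves) (simp_all add: measure_def)
  also have "\<dots> = 2 * (\<integral>\<^sup>+w\<in>R'. X1 w \<partial>lborel) + 2 * (\<integral>\<^sup>+w\<in>R'. X2 w \<partial>lborel)"
    unfolding R'_def by (simp add: distrib_right mult.assoc nn_integral_add nn_integral_cmult)
  also have "\<dots> \<le> 2 * (ennreal r * (4 * ?J1))
      + 2 * (ennreal (2 * r) * 2^CARD('m) * ennreal (4 * real CARD('m) * B^2) * ?J2)"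
    unfolding X1_def X2_def r(2,3)[symmetric] unfolding R_def R'_def
    using a' b' zero far by (intro add_mono mult_left_mono slab_hardy_fst_average slab_poincare_snd) simp_all
  also have "\<dots> = ennreal r * (8 * ?J1 + ennreal ?c * ?J2)"
  proof -
    have "2 * (ennreal (2 * r) * 2^CARD('m) * ennreal (4 * real CARD('m) * B^2) * ?J2)
        = ennreal r * (ennreal ?c * ?J2)"
      using coeff by (simp only: mult.assoc[symmetric])
    moreover have "2 * (ennreal r * (4 * ?J1)) = ennreal r * (8 * ?J1)"
      by (simp add: mult_ac)
    ultimately show ?thesis
      by (simp add: distrib_left)
  qed
  finally show ?thesis
    using r by (simp add: ennreal_mult_le_mult_iff mult.commute[of "ennreal ?V"])
qed

lemma set_integrable_weighted_energy:
  fixes S :: "'m pt set" and w1 w2 :: "'m pt \<Rightarrow> real"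
  assumes S: "S \<in> sets borel" "bounded S"
    and [measurable]: "w1 \<in> borel_measurable borel" "w2 \<in> borel_measurable borel"
    and w: "\<And>x. x \<in> S \<Longrightarrow> 0 \<le> w1 x \<and> w1 x \<le> W \<and> 0 \<le> w2 x \<and> w2 x \<le> W"
  shows "set_integrable lborel S (\<lambda>x. w1 x * (d1 \<phi> x)^2 + w2 x * grad2sq \<phi> x)"
proof -
  have "compact (closure S)"
    using S by (simp add: compact_closure)
  then have "bounded ((\<lambda>x. (d1 \<phi> x)^2 + grad2sq \<phi> x) ` closure S)"
    by (intro compact_imp_bounded compact_continuous_image continuous_intros
          continuous_on_subset[OF continuous_on_d1] continuous_on_subset[OF continuous_on_grad2sq]) auto
  then obtain M where M: "\<And>x. x \<in> S \<Longrightarrow> \<bar>(d1 \<phi> x)^2 + grad2sq \<phi> x\<bar> \<le> M"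
    using closure_subset by (auto simp: bounded_iff)
  show ?thesis
  proof (rule set_integrable_bounded[OF S(1) _ S(2), where K="W * M"])
    fix x assume x: "x \<in> S"
    have W: "0 \<le> W"
      using w[OF x] by linarith
    have "w1 x * (d1 \<phi> x)^2 + w2 x * grad2sq \<phi> x \<le> W * ((d1 \<phi> x)^2 + grad2sq \<phi> x)"
      using w[OF x] grad2sq_nonneg[of x] by (auto simp: distrib_left intro!: add_mono mult_right_mono)
    also have "\<dots> \<le> W * M"
      using M[OF x] W by (intro mult_left_mono) auto
    finally show "\<bar>w1 x * (d1 \<phi> x)^2 + w2 x * grad2sq \<phi> x\<bar> \<le> W * M"
      using w[OF x] grad2sq_nonneg[of x] by (simp add: abs_of_nonneg)
  qed measurable
qed

theorem slab_poincare_weighted: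
  fixes a b a' b' B t c W :: real and w1 w2 :: "'m pt \<Rightarrow> real"
  assumes B: "0 < B" and a': "a \<le> a'" "a' < b'" and b': "b' \<le> b" and len: "b - a = 2 * (b' - a')"
    and zero: "0 \<notin> {a<..<b}" and far: "\<And>s. s \<in> {a'<..<b'} \<Longrightarrow> \<bar>(a + b) / 2\<bar> \<le> \<bar>s\<bar>"
    and [measurable]: "w1 \<in> borel_measurable borel" "w2 \<in> borel_measurable borel"
    and w: "\<And>x. x \<in> slab a b B \<Longrightarrow> 0 \<le> w1 x \<and> w1 x \<le> W \<and> 0 \<le> w2 x \<and> w2 x \<le> W"
    and c: "0 \<le> c"
    and w1: "\<And>x. x \<in> slab a b B \<Longrightarrow> (fst x)^2 \<le> t^2 * w1 x"
    and w2: "\<And>x. x \<in> slab a' b' B \<Longrightarrow> B^2 \<le> c * t^2 * w2 x"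
  shows "(LINT x:slab a b B|lborel. (\<phi> x - (LINT y:slab a b B|lborel. \<phi> y) / measure lborel (slab a b B :: 'm pt set))^2)
     \<le> (8 + 2^(CARD('m)+4) * real CARD('m) * c) * t^2
         * (LINT x:slab a b B|lborel. w1 x * (d1 \<phi> x)^2 + w2 x * grad2sq \<phi> x)"
    (is "?V \<le> (8 + ?C * c) * t^2 * (LINT x:_|_. ?G x)")
proof -
  have G: "set_integrable lborel (slab a b B) ?G" "\<And>x. x \<in> slab a b B \<Longrightarrow> 0 \<le> ?G x"
    using w grad2sq_nonneg
    by (auto intro!: set_integrable_weighted_energy bounded_slab add_nonneg_nonneg)
  have pointwise: "8 * (ennreal ((fst x)^2 * (d1 \<phi> x)^2) * indicator (slab a b B) x)
      + ennreal (?C * B^2) * (ennreal (grad2sq \<phi> x) * indicator (slab a' b' B) x)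
      \<le> ennreal ((8 + ?C * c) * t^2 * ?G x) * indicator (slab a b B) x" for x
  proof (cases "x \<in> slab a b B")
    case True
    let ?B2 = "if x \<in> slab a' b' B then B^2 else 0"
    have "8 * ((fst x)^2 * (d1 \<phi> x)^2) + ?C * ?B2 * grad2sq \<phi> x \<le> (8 + ?C * c) * t^2 * ?G x"
      using w[OF True] w1[OF True] w2 c grad2sq_nonneg[of x]
      by (intro weighted_energy_le) auto
    moreover have "8 * (ennreal ((fst x)^2 * (d1 \<phi> x)^2) * indicator (slab a b B) x)
        + ennreal (?C * B^2) * (ennreal (grad2sq \<phi> x) * indicator (slab a' b' B) x)
      = ennreal (8 * ((fst x)^2 * (d1 \<phi> x)^2) + ?C * ?B2 * grad2sq \<phi> x)"
      using True grad2sq_nonneg[of x] by (simp add: ennreal_plus ennreal_mult)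
    ultimately show ?thesis
      using True by (simp add: ennreal_leI)
  qed (use a' b' in \<open>auto simp: slab_def split: split_indicator\<close>)
  have "ennreal ?V \<le> 8 * (\<integral>\<^sup>+x\<in>slab a b B. ennreal ((fst x)^2 * (d1 \<phi> x)^2) \<partial>lborel)
       + ennreal (?C * B^2) * (\<integral>\<^sup>+x\<in>slab a' b' B. ennreal (grad2sq \<phi> x) \<partial>lborel)"
    by (rule slab_poincare[OF B a' b' len zero far])
  also have "\<dots> \<le> (\<integral>\<^sup>+x\<in>slab a b B. ennreal ((8 + ?C * c) * t^2 * ?G x) \<partial>lborel)"
    using pointwise by (simp add: nn_integral_add[symmetric] nn_integral_cmult[symmetric] nn_integral_mono)
  also have "\<dots> = ennreal (LINT x:slab a b B|lborel. (8 + ?C * c) * t^2 * ?G x)"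
    using G c by (intro set_nn_integral_eq_set_integral set_integrable_mult_right) auto
  finally have "ennreal ?V \<le> ennreal (LINT x:slab a b B|lborel. (8 + ?C * c) * t^2 * ?G x)" .
  moreover have "0 \<le> (LINT x:slab a b B|lborel. (8 + ?C * c) * t^2 * ?G x)"
    unfolding set_lebesgue_integral_def
    using G c by (intro integral_nonneg_AE) (auto split: split_indicator)
  ultimately show ?thesis
    by simp
qed

theorem half_box_poincare:
  fixes \<delta>1 \<delta>1' \<delta>2 \<delta>2' t a b :: real
  assumes \<delta>: "0 \<le> \<delta>1" "\<delta>1 < 1" "0 \<le> \<delta>1'" "\<delta>1' < 1" "0 \<le> \<delta>2" "0 \<le> \<delta>2'" and t: "0 < t"
    and ab: "(a = 0 \<and> b = side1 \<delta>1 \<delta>1' t) \<or> (a = - side1 \<delta>1 \<delta>1' t \<and> b = 0)"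
  shows "(LINT x:slab a b (side2 \<delta>1 \<delta>1' \<delta>2 \<delta>2' t)|lborel.
            (\<phi> x - (LINT y:slab a b (side2 \<delta>1 \<delta>1' \<delta>2 \<delta>2' t)|lborel. \<phi> y)
                    / measure lborel (slab a b (side2 \<delta>1 \<delta>1' \<delta>2 \<delta>2' t) :: 'm pt set))^2)
     \<le> (8 + 2^(CARD('m)+4) * real CARD('m) * 2 powr (2 * \<delta>2 + 2 * \<delta>2')) * t^2
         * (LINT x:slab a b (side2 \<delta>1 \<delta>1' \<delta>2 \<delta>2' t)|lborel.
              ppow \<bar>fst x\<bar> (2 * \<delta>1) (2 * \<delta>1') * (d1 \<phi> x)^2 + ppow \<bar>fst x\<bar> (2 * \<delta>2) (2 * \<delta>2') * grad2sq \<phi> x)"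
proof -
  define A where "A = side1 \<delta>1 \<delta>1' t"
  have A: "0 < A"
    using t by (simp add: A_def side1_pos)
  \<comment> \<open>\<open>(a', b')\<close> is the half of \<open>(a, b)\<close> away from \<open>0\<close>.\<close>
  obtain a' b' where cfg: "a \<le> a'" "a' < b'" "b' \<le> b" "b - a = 2 * (b' - a')"
    and zero: "0 \<notin> {a<..<b}" and far: "\<And>s. s \<in> {a'<..<b'} \<Longrightarrow> \<bar>(a + b) / 2\<bar> \<le> \<bar>s\<bar>"
    and inner: "\<And>y. y \<in> {a<..<b} \<Longrightarrow> 0 < \<bar>y\<bar> \<and> \<bar>y\<bar> < A"
    and outer: "\<And>y. y \<in> {a'<..<b'} \<Longrightarrow> A / 2 \<le> \<bar>y\<bar> \<and> \<bar>y\<bar> \<le> A"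
  proof (cases "a = 0")
    case True
    then show ?thesis
      using ab A by (intro that[of "A / 2" A]) (auto simp: A_def)
  next
    case False
    then show ?thesis
      using ab A by (intro that[of "- A" "- A / 2"]) (auto simp: A_def)
  qed
  show ?thesis
  proof (rule slab_poincare_weighted[OF side2_pos[OF t] cfg zero far, where W = "1 + A powr (2 * \<delta>1') + A powr (2 * \<delta>2')"])
    fix x :: "'m pt"
    assume "x \<in> slab a b (side2 \<delta>1 \<delta>1' \<delta>2 \<delta>2' t)"
    then have x: "0 < \<bar>fst x\<bar>" "\<bar>fst x\<bar> < A"
      using inner by (auto simp: slab_def)
    have "ppow \<bar>fst x\<bar> (2 * \<delta>1) (2 * \<delta>1') \<le> 1 + A powr (2 * \<delta>1')"
      "ppow \<bar>fst x\<bar> (2 * \<delta>2) (2 * \<delta>2') \<le> 1 + A powr (2 * \<delta>2')"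
      using x \<delta> by (intro ppow_le_one_plus; simp)+
    then show "0 \<le> ppow \<bar>fst x\<bar> (2 * \<delta>1) (2 * \<delta>1') \<and> ppow \<bar>fst x\<bar> (2 * \<delta>1) (2 * \<delta>1') \<le> 1 + A powr (2 * \<delta>1') + A powr (2 * \<delta>2')
        \<and> 0 \<le> ppow \<bar>fst x\<bar> (2 * \<delta>2) (2 * \<delta>2') \<and> ppow \<bar>fst x\<bar> (2 * \<delta>2) (2 * \<delta>2') \<le> 1 + A powr (2 * \<delta>1') + A powr (2 * \<delta>2')"
      using ppow_nonneg powr_ge_zero[of A] by (smt (verit))
    show "(fst x)^2 \<le> t^2 * ppow \<bar>fst x\<bar> (2 * \<delta>1) (2 * \<delta>1')"
      using sq_le_ppow_weight[OF t \<delta>(1-4) x[unfolded A_def]] by simp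
  next
    fix x :: "'m pt"
    assume "x \<in> slab a' b' (side2 \<delta>1 \<delta>1' \<delta>2 \<delta>2' t)"
    then have "A / 2 \<le> \<bar>fst x\<bar>" "\<bar>fst x\<bar> \<le> A"
      using outer by (auto simp: slab_def)
    then show "(side2 \<delta>1 \<delta>1' \<delta>2 \<delta>2' t)^2 \<le> 2 powr (2 * \<delta>2 + 2 * \<delta>2') * t^2 * ppow \<bar>fst x\<bar> (2 * \<delta>2) (2 * \<delta>2')"
      using \<delta> unfolding A_def by (intro side2_sq_le_ppow_weight[OF t]) auto
  qed auto
qed

end

lemma Cplus_eq_slab: "Cplus \<delta>1 \<delta>1' \<delta>2 \<delta>2' t = slab 0 (side1 \<delta>1 \<delta>1' t) (side2 \<delta>1 \<delta>1' \<delta>2 \<delta>2' t)"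
  and Cminus_eq_slab: "Cminus \<delta>1 \<delta>1' \<delta>2 \<delta>2' t = slab (- side1 \<delta>1 \<delta>1' t) 0 (side2 \<delta>1 \<delta>1' \<delta>2 \<delta>2' t)"
  unfolding Cplus_def Cminus_def Cbox_def Let_def slab_def side1_def side2_def
  by (auto simp: mem_cube)

theorem proposition3p7:
  fixes d1 d1' d2 d2' :: real
  assumes "1/2 \<le> d1" "d1 < 1" "0 \<le> d1'" "d1' < 1" "0 \<le> d2" "0 \<le> d2'"
  shows "\<exists>lam>0. \<forall>C \<in> {Cplus d1 d1' d2 d2', Cminus d1 d1' d2 d2'}.
           \<forall>(\<phi> :: real \<times> (real^'m::finite) \<Rightarrow> real) t. Cc1 \<phi> \<longrightarrow> t > 0 \<longrightarrow>
             (LINT x : C t | lborel. Gamma_delta d1 d1' d2 d2' \<phi> x)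
             \<ge> lam * t powr (-2) *
               (LINT x : C t | lborel.
                  (\<phi> x - (LINT y : C t | lborel. \<phi> y) / measure lborel (C t))\<^sup>2)"
proof -
  define K where "K = 8 + 2^(CARD('m)+4) * real CARD('m) * 2 powr (2 * d2 + 2 * d2')"
  have K: "0 < K"
    unfolding K_def by (simp add: add_pos_nonneg)
  have "1 / K * t powr (-2) * (LINT x:C t|lborel. (\<phi> x - (LINT y:C t|lborel. \<phi> y) / measure lborel (C t))^2)
      \<le> (LINT x:C t|lborel. Gamma_delta d1 d1' d2 d2' \<phi> x)"
    if C: "C \<in> {Cplus d1 d1' d2 d2', Cminus d1 d1' d2 d2'}" and "Cc1 \<phi>" "0 < t"
    for C :: "real \<Rightarrow> 'm pt set" and \<phi> t
  proof -
    obtain f' where deriv: "\<And>x. (\<phi> has_derivative blinfun_apply (f' x)) (at x)" "continuous_on UNIV f'"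
      using \<open>Cc1 \<phi>\<close> unfolding Cc1_def by blast
    obtain a b where "C t = slab a b (side2 d1 d1' d2 d2' t)"
      and "(a = 0 \<and> b = side1 d1 d1' t) \<or> (a = - side1 d1 d1' t \<and> b = 0)"
      using C Cplus_eq_slab Cminus_eq_slab by blast
    from half_box_poincare[OF deriv _ _ _ _ _ _ \<open>0 < t\<close> this(2)] this(1) assms
    have "(LINT x:C t|lborel. (\<phi> x - (LINT y:C t|lborel. \<phi> y) / measure lborel (C t))^2)
        \<le> K * t^2 * (LINT x:C t|lborel. Gamma_delta d1 d1' d2 d2' \<phi> x)"
      (is "?V \<le> K * t^2 * ?I")
      unfolding Gamma_delta_def K_def by simp
    moreover have "1 / K * t powr (-2) * ?V = ?V / (K * t^2)"
      using \<open>0 < t\<close> by (simp add: powr_minus powr_numeral field_simps)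
    ultimately show ?thesis
      using K \<open>0 < t\<close> by (simp add: pos_divide_le_eq mult_ac)
  qed
  with K show ?thesis
    by (intro exI[of _ "1 / K"]) auto
qed

end
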